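(* For every $s>1/4$ there is $C$ depending only on $s$ such that for every finite linear combination $w$ of the functions $w_{ij}$, $$\|Tr(w)\|_{X^{s-1/4}(I)}\le C\|w\|_{X^s(\Omega)},$$ where $Tr(w)(x_1)=w(x_1,0)$. Consequently $Tr$ extends uniquely to a bounded operator $X^s(\Omega)\to X^{s-1/4}(I)$.
   Context: $I_+=(0,1)$, $I=(-1,1)$, $\Omega=I\times I_+$. $u_i(x_1)=c_{1i}\cos(i\pi(x_1+1)/2)$, $v_j(x_2)=c_{2j}\cos(j\pi x_2)$, $w_{ij}=u_i(x_1)v_j(x_2)$ ($i,j\ge0$), $c_{10}=1/\sqrt2$, $c_{1i}=1$ ($i\ge1$), $c_{20}=1$, $c_{2j}=\sqrt2$ ($j\ge1$). $\lambda^I_i=-(i\pi/2)^2$, $\lambda^\Omega_{ij}=-(i\pi/2)^2-(j\pi)^2$. For $s\ge0$: $X^s(I)=\{u\in L_2(I):\|u\|^2_{X^s(I)}=\sum_i(1-\lambda^I_i)^{2s}(u|u_i)_{L_2}^2<\infty\}$, $X^s(\Omega)=\{w\in L_2(\Omega):\|w\|^2_{X^s(\Omega)}=\sum_{i,j}(1-\lambda^\Omega_{ij})^{2s}(w|w_{ij})_{L_2}^2<\infty\}$. *)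

theory Defs
  imports "HOL-Analysis.Analysis"
begin

definition I_int :: "real set" where "I_int = {-1<..<1}"
definition Omega :: "(real \<times> real) set" where "Omega = {-1<..<1} \<times> {0<..<1}"

definition c1 :: "nat \<Rightarrow> real" where "c1 i = (if i = 0 then 1 / sqrt 2 else 1)"
definition c2 :: "nat \<Rightarrow> real" where "c2 j = (if j = 0 then 1 else sqrt 2)"

definition u_fun :: "nat \<Rightarrow> real \<Rightarrow> real" where
  "u_fun i x = c1 i * cos (real i * pi * (x + 1) / 2)"
definition v_fun :: "nat \<Rightarrow> real \<Rightarrow> real" where
  "v_fun j y = c2 j * cos (real j * pi * y)"
definition w_fun :: "nat \<Rightarrow> nat \<Rightarrow> real \<times> real \<Rightarrow> real" where
  "w_fun i j p = u_fun i (fst p) * v_fun j (snd p)"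

definition lamI :: "nat \<Rightarrow> real" where "lamI i = - ((real i * pi / 2) ^ 2)"
definition lamO :: "nat \<Rightarrow> nat \<Rightarrow> real" where
  "lamO i j = - ((real i * pi / 2) ^ 2) - (real j * pi) ^ 2"

definition ipI :: "(real \<Rightarrow> real) \<Rightarrow> (real \<Rightarrow> real) \<Rightarrow> real" where
  "ipI f g = (LINT x:I_int|lborel. f x * g x)"
definition ipO :: "(real \<times> real \<Rightarrow> real) \<Rightarrow> (real \<times> real \<Rightarrow> real) \<Rightarrow> real" where
  "ipO f g = (LINT p:Omega|lborel. f p * g p)"

definition L2I :: "(real \<Rightarrow> real) \<Rightarrow> bool" where
  "L2I f \<longleftrightarrow> set_borel_measurable lborel I_int f \<and> set_integrable lborel I_int (\<lambda>x. (f x)\<^sup>2)"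
definition L2O :: "(real \<times> real \<Rightarrow> real) \<Rightarrow> bool" where
  "L2O f \<longleftrightarrow> set_borel_measurable lborel Omega f \<and> set_integrable lborel Omega (\<lambda>p. (f p)\<^sup>2)"

definition XsI :: "real \<Rightarrow> (real \<Rightarrow> real) set" where
  "XsI s = {f. L2I f \<and> summable (\<lambda>i. (1 - lamI i) powr (2 * s) * (ipI f (u_fun i))\<^sup>2)}"
definition normI :: "real \<Rightarrow> (real \<Rightarrow> real) \<Rightarrow> real" where
  "normI s f = sqrt (\<Sum>i. (1 - lamI i) powr (2 * s) * (ipI f (u_fun i))\<^sup>2)"

definition XsO :: "real \<Rightarrow> (real \<times> real \<Rightarrow> real) set" where
  "XsO s = {f. L2O f \<and>
     (\<lambda>(i,j). (1 - lamO i j) powr (2 * s) * (ipO f (w_fun i j))\<^sup>2) summable_on (UNIV :: (nat \<times> nat) set)}"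
definition normO :: "real \<Rightarrow> (real \<times> real \<Rightarrow> real) \<Rightarrow> real" where
  "normO s f = sqrt (\<Sum>\<^sub>\<infinity>(i,j)\<in>(UNIV :: (nat \<times> nat) set). (1 - lamO i j) powr (2 * s) * (ipO f (w_fun i j))\<^sup>2)"

definition finite_comb :: "(real \<times> real \<Rightarrow> real) \<Rightarrow> bool" where
  "finite_comb w \<longleftrightarrow> (\<exists>F a. finite F \<and> w = (\<lambda>p. \<Sum>(i,j)\<in>F. a i j * w_fun i j p))"

definition Tr :: "(real \<times> real \<Rightarrow> real) \<Rightarrow> real \<Rightarrow> real" where
  "Tr w x1 = w (x1, 0)"

text \<open>T is a bounded linear operator X^s(Omega) -> X^(s-1/4)(I) extending Tr from finite
  combinations; equalities of L2 elements are understood almost everywhere.\<close>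
definition trace_ext :: "real \<Rightarrow> ((real \<times> real \<Rightarrow> real) \<Rightarrow> real \<Rightarrow> real) \<Rightarrow> bool" where
  "trace_ext s T \<longleftrightarrow>
     (\<forall>w\<in>XsO s. T w \<in> XsI (s - 1/4)) \<and>
     (\<forall>w\<in>XsO s. \<forall>v\<in>XsO s. \<forall>a b::real.
        AE x in lborel. x \<in> I_int \<longrightarrow> T (\<lambda>p. a * w p + b * v p) x = a * T w x + b * T v x) \<and>
     (\<exists>C. \<forall>w\<in>XsO s. normI (s - 1/4) (T w) \<le> C * normO s w) \<and>
     (\<forall>w. finite_comb w \<longrightarrow> (AE x in lborel. x \<in> I_int \<longrightarrow> T w x = Tr w x))"

end

theory Submission
  imports Defs
begin

(* Since v_j(0) = c2 j, the trace of w = \<Sum> a_ij w_ij is \<Sum>_i b_i u_i with b_i = \<Sum>_j a_ij c2 j.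
  With A_i = 1 - lamI i we have 1 - lamO i j = A_i + (j pi)^2, and Cauchy-Schwarz gives
    b_i^2 \<le> (\<Sum>_j 2 (A_i + (j pi)^2)^(-2s)) * (\<Sum>_j (1 - lamO i j)^(2s) a_ij^2).
  For s > 1/4 the first factor is O(A_i^(1/2 - 2s)), like the integral of (A_i + t^2)^(-2s) over t \<ge> 0;
  multiplying by A_i^(2s - 1/2) and summing over i yields the estimate.
  For arbitrary w in X^s(Omega) the same bound makes (b_i) square summable, so Riesz-Fischer provides
  an L2 function with these coefficients, which defines the extension.  Any bounded extension has the
  same coefficients, as w is approximated by its truncations, and therefore agrees with it almost
  everywhere: the cosine system is complete in L2(I), a consequence of Stone-Weierstrass after the
  substitution y = cos (pi (x + 1) / 2). *)
subsection \<open>Orthonormality of the cosine systems\<close>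

lemma interval_integral_cos_eq_0:
  fixes a b c d :: real
  assumes "a \<le> b" "c \<noteq> 0" "sin (c * (b + d)) = 0" "sin (c * (a + d)) = 0"
  shows "(LBINT x=ereal a..ereal b. cos (c * (x + d))) = 0"
proof -
  have "(LBINT x=ereal a..ereal b. cos (c * (x + d))) = sin (c * (b + d)) / c - sin (c * (a + d)) / c"
  proof (rule interval_integral_FTC_finite)
    show "continuous_on {min a b..max a b} (\<lambda>x. cos (c * (x + d)))" by (intro continuous_intros)
    fix x
    have "((\<lambda>x. sin (c * (x + d)) / c) has_real_derivative cos (c * (x + d))) (at x)"
      using assms(2) by (auto intro!: derivative_eq_intros)
    then show "((\<lambda>x. sin (c * (x + d)) / c) has_vector_derivative cos (c * (x + d)))
        (at x within {min a b..max a b})"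
      by (simp add: has_real_derivative_iff_has_vector_derivative has_vector_derivative_at_within)
  qed
  then show ?thesis using assms by simp
qed

lemma integral_cos_I:
  "(LBINT x=ereal (-1)..ereal 1. cos (real m * pi * (x + 1) / 2)) = (if m = 0 then 2 else 0)"
proof (cases "m = 0")
  case False
  have "sin ((real m * pi / 2) * (1 + 1)) = 0"
    using sin_npi[of m] by (simp add: mult.commute)
  then have "(LBINT x=ereal (-1)..ereal 1. cos ((real m * pi / 2) * (x + 1))) = 0"
    using False by (intro interval_integral_cos_eq_0) auto
  then show ?thesis using False by (simp add: field_simps)
qed simp

lemma integral_cos_Iplus:
  "(LBINT x=ereal 0..ereal 1. cos (real m * pi * x)) = (if m = 0 then 1 else 0)"
proof (cases "m = 0")
  case False
  have "(LBINT x=ereal 0..ereal 1. cos ((real m * pi) * (x + 0))) = 0"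
    using False by (intro interval_integral_cos_eq_0) (auto simp: sin_npi)
  then show ?thesis using False by (simp add: mult.assoc)
qed simp

lemma cos_mult_cos_nat:
  fixes i k :: nat and t :: real
  shows "cos (real i * t) * cos (real k * t) =
     (cos (real (if k \<le> i then i - k else k - i) * t) + cos (real (i + k) * t)) / 2"
proof -
  have "cos (real i * t - real k * t) = cos (real (if k \<le> i then i - k else k - i) * t)"
  proof (cases "k \<le> i")
    case False
    then have "real i * t - real k * t = - (real (k - i) * t)"
      by (simp add: of_nat_diff left_diff_distrib)
    then show ?thesis using False by (simp only: cos_minus) simp
  qed (simp add: of_nat_diff left_diff_distrib)
  moreover have "real i * t + real k * t = real (i + k) * t" by (simp add: distrib_right)
  ultimately show ?thesis by (simp add: cos_times_cos)
qed

lemma u_fun_mult: "u_fun i x * u_fun k x = c1 i * c1 k / 2 *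
   (cos (real (if k \<le> i then i - k else k - i) * pi * (x + 1) / 2) + cos (real (i + k) * pi * (x + 1) / 2))"
proof -
  have "\<And>m::nat. real m * pi * (x + 1) / 2 = real m * (pi * (x + 1) / 2)" by simp
  then show ?thesis
    unfolding u_fun_def using cos_mult_cos_nat[of i "pi * (x + 1) / 2" k] by (simp add: field_simps)
qed

lemma v_fun_mult: "v_fun j y * v_fun l y = c2 j * c2 l / 2 *
   (cos (real (if l \<le> j then j - l else l - j) * pi * y) + cos (real (j + l) * pi * y))"
proof -
  have "\<And>m::nat. real m * pi * y = real m * (pi * y)" by simp
  then show ?thesis
    unfolding v_fun_def using cos_mult_cos_nat[of j "pi * y" l] by (simp add: field_simps)
qed

lemma ipI_interval_integral: "ipI f g = (LBINT x=ereal (-1)..ereal 1. f x * g x)"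
  by (simp add: ipI_def interval_lebesgue_integral_def I_int_def)

lemma ipI_u_fun: "ipI (u_fun i) (u_fun k) = (if i = k then 1 else 0)"
proof -
  define d where "d = (if k \<le> i then i - k else k - i)"
  have "ipI (u_fun i) (u_fun k) = (LBINT x=ereal (-1)..ereal 1. c1 i * c1 k / 2 *
     (cos (real d * pi * (x + 1) / 2) + cos (real (i + k) * pi * (x + 1) / 2)))"
    unfolding ipI_interval_integral u_fun_mult d_def ..
  also have "\<dots> = c1 i * c1 k / 2 * ((LBINT x=ereal (-1)..ereal 1. cos (real d * pi * (x + 1) / 2)) +
       (LBINT x=ereal (-1)..ereal 1. cos (real (i + k) * pi * (x + 1) / 2)))"
    by (subst interval_lebesgue_integral_mult_right, subst interval_lebesgue_integral_add(2))
       (auto intro!: interval_integrable_isCont continuous_intros)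
  also have "\<dots> = (if i = k then 1 else 0)"
    unfolding integral_cos_I by (auto simp: d_def c1_def)
  finally show ?thesis .
qed

lemma integral_v_fun_mult:
  "(LBINT y=ereal 0..ereal 1. v_fun j y * v_fun l y) = (if j = l then 1 else 0)"
proof -
  define d where "d = (if l \<le> j then j - l else l - j)"
  have "(LBINT y=ereal 0..ereal 1. v_fun j y * v_fun l y) = (LBINT y=ereal 0..ereal 1. c2 j * c2 l / 2 *
     (cos (real d * pi * y) + cos (real (j + l) * pi * y)))"
    unfolding v_fun_mult d_def ..
  also have "\<dots> = c2 j * c2 l / 2 * ((LBINT y=ereal 0..ereal 1. cos (real d * pi * y)) +
       (LBINT y=ereal 0..ereal 1. cos (real (j + l) * pi * y)))"
    by (subst interval_lebesgue_integral_mult_right, subst interval_lebesgue_integral_add(2))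
       (auto intro!: interval_integrable_isCont continuous_intros)
  also have "\<dots> = (if j = l then 1 else 0)"
    unfolding integral_cos_Iplus by (auto simp: d_def c2_def)
  finally show ?thesis .
qed

lemma integral_lborel_pair_mult:
  fixes F G :: "real \<Rightarrow> real"
  assumes F: "integrable lborel F" and G: "integrable lborel G"
  shows "integrable lborel (\<lambda>p::real \<times> real. F (fst p) * G (snd p))"
    and "integral\<^sup>L lborel (\<lambda>p::real \<times> real. F (fst p) * G (snd p)) =
      integral\<^sup>L lborel F * integral\<^sup>L lborel G"
proof -
  have [measurable]: "F \<in> borel_measurable borel" "G \<in> borel_measurable borel" using F G by auto
  have int: "integrable (lborel \<Otimes>\<^sub>M lborel) (\<lambda>p::real \<times> real. F (fst p) * G (snd p))"
  proof (rule lborel_pair.Fubini_integrable)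
    show "integrable lborel (\<lambda>x. LINT y|lborel. norm (F (fst (x, y)) * G (snd (x, y))))"
      using F G by (simp add: abs_mult)
  qed (use G in simp_all)
  then show "integrable lborel (\<lambda>p::real \<times> real. F (fst p) * G (snd p))"
    by (simp add: lborel_prod)
  show "integral\<^sup>L lborel (\<lambda>p::real \<times> real. F (fst p) * G (snd p)) =
      integral\<^sup>L lborel F * integral\<^sup>L lborel G"
    using lborel_pair.integral_fst'[OF int] by (simp add: lborel_prod)
qed

lemma set_integral_Omega_mult:
  fixes f g :: "real \<Rightarrow> real"
  assumes "continuous_on UNIV f" "continuous_on UNIV g"
  shows "(LINT p:Omega|lborel. f (fst p) * g (snd p)) =
    (LBINT x=ereal (-1)..ereal 1. f x) * (LBINT y=ereal 0..ereal 1. g y)"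
proof -
  have "interval_lebesgue_integrable lborel (ereal (-1)) (ereal 1) f"
       "interval_lebesgue_integrable lborel (ereal 0) (ereal 1) g"
    using assms by (auto intro!: interval_integrable_isCont simp: continuous_on_eq_continuous_at)
  then have "integrable lborel (\<lambda>x. indicator {-1<..<1} x * f x)"
      and "integrable lborel (\<lambda>y. indicator {0<..<1} y * g y)"
    by (simp_all add: interval_lebesgue_integrable_def set_integrable_def)
  note prod = integral_lborel_pair_mult(2)[OF this]
  have split: "(\<lambda>p. indicator Omega p *\<^sub>R (f (fst p) * g (snd p))) =
     (\<lambda>p. (indicator {-1<..<1} (fst p) * f (fst p)) * (indicator {0<..<1} (snd p) * g (snd p)))"
    by (auto simp: Omega_def indicator_def)
  show ?thesis
    unfolding set_lebesgue_integral_def split prod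
    by (simp add: interval_lebesgue_integral_def set_lebesgue_integral_def)
qed

lemma continuous_on_u_fun: "continuous_on UNIV (u_fun i)"
  unfolding u_fun_def by (auto intro!: continuous_intros)

lemma continuous_on_v_fun: "continuous_on UNIV (v_fun j)"
  unfolding v_fun_def by (intro continuous_intros)

lemma continuous_on_w_fun: "continuous_on UNIV (w_fun i j)"
  unfolding w_fun_def
  by (intro continuous_intros continuous_on_compose2[OF continuous_on_u_fun]
      continuous_on_compose2[OF continuous_on_v_fun]) auto

lemma ipO_w_fun: "ipO (w_fun i j) (w_fun k l) = (if i = k \<and> j = l then 1 else 0)"
proof -
  have "ipO (w_fun i j) (w_fun k l) =
      (LINT p:Omega|lborel. (u_fun i (fst p) * u_fun k (fst p)) * (v_fun j (snd p) * v_fun l (snd p)))"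
    unfolding ipO_def w_fun_def by (simp add: ac_simps)
  also have "\<dots> = ipI (u_fun i) (u_fun k) * (LBINT y=ereal 0..ereal 1. v_fun j y * v_fun l y)"
    unfolding ipI_interval_integral
    by (rule set_integral_Omega_mult) (intro continuous_intros continuous_on_u_fun continuous_on_v_fun)+
  finally show ?thesis by (simp add: ipI_u_fun integral_v_fun_mult)
qed

subsection \<open>A lattice sum estimate\<close>

lemma powr_minus_Suc_le_diff:
  fixes q x :: real
  assumes q: "q > 0" and x: "x > 1"
  shows "x powr (-(q + 1)) \<le> ((x - 1) powr (-q) - x powr (-q)) / q"
proof -
  obtain z where z: "x - 1 < z" "z < x" "x powr (-q) - (x - 1) powr (-q) = (x - (x - 1)) * (-q * z powr (-q - 1))"
  proof (rule MVT2[of "x - 1" x "\<lambda>t. t powr (-q)" "\<lambda>t. -q * t powr (-q - 1)", elim_format])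
    fix t assume "x - 1 \<le> t" "t \<le> x"
    then show "DERIV (\<lambda>t. t powr (-q)) t :> -q * t powr (-q - 1)"
      using x by (auto intro!: derivative_eq_intros simp: field_simps)
  qed auto
  have "q * x powr (-(q + 1)) \<le> q * z powr (-(q + 1))"
    using z q x by (intro mult_left_mono powr_mono2') auto
  also have "q * z powr (-(q + 1)) = (x - 1) powr (-q) - x powr (-q)"
  proof -
    have "-q - 1 = -(q + 1)" by simp
    then show ?thesis using z(3) by simp
  qed
  finally show ?thesis using q by (simp add: field_simps)
qed

lemma sum_powr_tail_le:
  fixes q :: real and M n :: nat
  assumes q: "q > 0" and M: "M \<ge> 1"
  shows "(\<Sum>j\<in>{Suc M..<n}. real j powr (-(q + 1))) \<le> real M powr (-q) / q"
proof -
  have telescope: "(\<Sum>j\<in>{Suc M..<Suc M + k}. real j powr (-(q + 1))) \<le>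
      (real M powr (-q) - real (M + k) powr (-q)) / q" for k
  proof (induction k)
    case (Suc k)
    have "real (Suc M + k) powr (-(q + 1)) \<le>
        ((real (Suc M + k) - 1) powr (-q) - real (Suc M + k) powr (-q)) / q"
      using M by (intro powr_minus_Suc_le_diff q) simp
    with Suc show ?case using q by (simp add: field_simps)
  qed simp
  have "(\<Sum>j\<in>{Suc M..<n}. real j powr (-(q + 1))) \<le> (\<Sum>j\<in>{Suc M..<Suc M + n}. real j powr (-(q + 1)))"
    by (rule sum_mono2) auto
  also have "\<dots> \<le> (real M powr (-q) - real (M + n) powr (-q)) / q"
    by (rule telescope)
  also have "\<dots> \<le> real M powr (-q) / q"
    using q by (simp add: divide_right_mono)
  finally show ?thesis .
qed

context
  fixes s A :: real
  assumes s: "s > 1/4" and A: "A \<ge> 1"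
begin

text \<open>The sum over \<open>j\<close> is split at \<open>M = \<lceil>\<surd>A\<rceil>\<close>: the at most \<open>3\<surd>A\<close> head terms are each at most
  \<open>A\<^bsup>-2s\<^esup>\<close>, and the tail is compared with \<open>\<Sum>\<^sub>j\<^sub>>\<^sub>M j\<^bsup>-4s\<^esup>\<close>.\<close>

private lemma sqrt_A_ge_1: "sqrt A \<ge> 1"
  using A by simp

private lemma sqrt_powr: "sqrt A powr r = A powr (r / 2)"
proof -
  have "sqrt A = A powr (1/2)" using A by (simp add: powr_half_sqrt)
  then show ?thesis by (simp add: powr_powr)
qed

private lemma sum_head_le:
  assumes "real M \<le> sqrt A + 1"
  shows "(\<Sum>j\<le>M. (A + (real j * pi)\<^sup>2) powr (- 2 * s)) \<le> 3 * A powr (1/2 - 2 * s)"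
proof -
  have "(\<Sum>j\<le>M. (A + (real j * pi)\<^sup>2) powr (- 2 * s)) \<le> (\<Sum>j\<le>M. A powr (- 2 * s))"
    by (intro sum_mono powr_mono2') (use A s in auto)
  also have "\<dots> = (real M + 1) * A powr (- 2 * s)" by simp
  also have "\<dots> \<le> (3 * sqrt A) * A powr (- 2 * s)"
  proof (rule mult_right_mono)
    show "real M + 1 \<le> 3 * sqrt A" using assms sqrt_A_ge_1 by linarith
  qed simp
  also have "\<dots> = 3 * A powr (1/2 - 2 * s)"
  proof -
    have "sqrt A = A powr (1/2)" using A by (simp add: powr_half_sqrt)
    moreover have "A powr (1/2) * A powr (- 2 * s) = A powr (1/2 + - 2 * s)" by (rule powr_add[symmetric])
    ultimately show ?thesis by simp
  qed
  finally show ?thesis .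
qed

private lemma sum_tail_le:
  assumes "real M \<ge> sqrt A"
  shows "(\<Sum>j\<in>{Suc M..<n}. (A + (real j * pi)\<^sup>2) powr (- 2 * s)) \<le> 1 / (4 * s - 1) * A powr (1/2 - 2 * s)"
proof -
  define q where "q = 4 * s - 1"
  have q: "q > 0" using s by (simp add: q_def)
  have "real M \<ge> 1" using assms sqrt_A_ge_1 by linarith
  then have M: "M \<ge> 1" by simp
  have "(\<Sum>j\<in>{Suc M..<n}. (A + (real j * pi)\<^sup>2) powr (- 2 * s)) \<le> (\<Sum>j\<in>{Suc M..<n}. real j powr (-(q + 1)))"
  proof (intro sum_mono)
    fix j assume "j \<in> {Suc M..<n}"
    then have j: "real j > 0" by auto
    have "(real j)\<^sup>2 \<le> (real j * pi)\<^sup>2"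
      using j pi_gt3 by (intro power_mono) auto
    then have "(real j)\<^sup>2 \<le> A + (real j * pi)\<^sup>2"
      using A by linarith
    then have "(A + (real j * pi)\<^sup>2) powr (- 2 * s) \<le> ((real j)\<^sup>2) powr (- 2 * s)"
      using A s j by (intro powr_mono2') auto
    also have "\<dots> = real j powr (-(q + 1))"
      using j by (simp add: powr_powr q_def flip: powr_numeral)
    finally show "(A + (real j * pi)\<^sup>2) powr (- 2 * s) \<le> real j powr (-(q + 1))" .
  qed
  also have "\<dots> \<le> real M powr (-q) / q" by (rule sum_powr_tail_le[OF q M])
  also have "\<dots> \<le> sqrt A powr (-q) / q"
    using q assms A by (intro divide_right_mono powr_mono2') auto
  also have "sqrt A powr (-q) = A powr (1/2 - 2 * s)"
    unfolding sqrt_powr by (simp add: q_def field_simps)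
  finally show ?thesis by (simp add: q_def)
qed

lemma sum_powr_shifted_squares_le:
  "(\<Sum>j<n. (A + (real j * pi)\<^sup>2) powr (- 2 * s)) \<le> (3 + 1 / (4 * s - 1)) * A powr (1/2 - 2 * s)"
proof -
  define M where "M = nat \<lceil>sqrt A\<rceil>"
  have M: "real M \<ge> sqrt A" "real M \<le> sqrt A + 1" unfolding M_def using sqrt_A_ge_1 by linarith+
  have "(\<Sum>j<n. (A + (real j * pi)\<^sup>2) powr (- 2 * s)) \<le>
      (\<Sum>j\<in>{..M} \<union> {Suc M..<n}. (A + (real j * pi)\<^sup>2) powr (- 2 * s))"
    by (intro sum_mono2) auto
  also have "\<dots> = (\<Sum>j\<le>M. (A + (real j * pi)\<^sup>2) powr (- 2 * s)) +
      (\<Sum>j\<in>{Suc M..<n}. (A + (real j * pi)\<^sup>2) powr (- 2 * s))"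
    by (rule sum.union_disjoint) auto
  also have "\<dots> \<le> (3 + 1 / (4 * s - 1)) * A powr (1/2 - 2 * s)"
    using sum_head_le[OF M(2)] sum_tail_le[OF M(1), of n] by (simp only: distrib_right)
  finally show ?thesis .
qed

end

definition L2 :: "'a::euclidean_space set \<Rightarrow> ('a \<Rightarrow> real) \<Rightarrow> bool" where
  "L2 S f \<longleftrightarrow> set_borel_measurable lborel S f \<and> set_integrable lborel S (\<lambda>x. (f x)\<^sup>2)"

lemma L2I_eq: "L2I = L2 I_int" by (simp add: fun_eq_iff L2I_def L2_def)
lemma L2O_eq: "L2O = L2 Omega" by (simp add: fun_eq_iff L2O_def L2_def)

locale finite_lborel_set =
  fixes S :: "'a::euclidean_space set"
  assumes S_sets: "S \<in> sets lborel" and S_fin: "emeasure lborel S < \<infinity>"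
begin

lemma set_integrable_const: "set_integrable lborel S (\<lambda>x. c::real)"
  unfolding set_integrable_def using integrable_real_indicator[OF S_sets S_fin]
  by (simp add: integrable_mult_left)

lemma set_borel_measurable_mult:
  assumes "set_borel_measurable lborel S f" "set_borel_measurable lborel S g"
  shows "set_borel_measurable lborel S (\<lambda>x. f x * (g x::real))"
proof -
  have "(\<lambda>x. indicator S x *\<^sub>R (f x * g x)) = (\<lambda>x. (indicator S x *\<^sub>R f x) * (indicator S x *\<^sub>R g x))"
    by (auto simp: fun_eq_iff indicator_def)
  then show ?thesis using assms unfolding set_borel_measurable_def by simp
qed

lemma set_borel_measurable_add:
  assumes "set_borel_measurable lborel S f" "set_borel_measurable lborel S g"
  shows "set_borel_measurable lborel S (\<lambda>x. f x + (g x::real))"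
proof -
  have "(\<lambda>x. indicator S x *\<^sub>R (f x + g x)) = (\<lambda>x. (indicator S x *\<^sub>R f x) + (indicator S x *\<^sub>R g x))"
    by (auto simp: fun_eq_iff indicator_def)
  then show ?thesis using assms unfolding set_borel_measurable_def by simp
qed

lemma set_borel_measurable_const: "set_borel_measurable lborel S (\<lambda>x. c::real)"
  unfolding set_borel_measurable_def using S_sets by simp

lemma set_borel_measurable_cmult:
  assumes "set_borel_measurable lborel S f"
  shows "set_borel_measurable lborel S (\<lambda>x. c * (f x::real))"
  by (rule set_borel_measurable_mult[OF set_borel_measurable_const assms])

lemma set_borel_measurable_borel:
  "f \<in> borel_measurable lborel \<Longrightarrow> set_borel_measurable lborel S (f::'a \<Rightarrow> real)"
  unfolding set_borel_measurable_def using S_sets by simp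

lemma set_borel_measurable_continuous:
  "continuous_on UNIV f \<Longrightarrow> set_borel_measurable lborel S (f::'a \<Rightarrow> real)"
  by (rule set_borel_measurable_borel) (simp add: borel_measurable_continuous_onI)

lemma L2_set_borel_measurable: "L2 S f \<Longrightarrow> set_borel_measurable lborel S f" by (simp add: L2_def)

lemma L2_set_integrable:
  assumes "L2 S f" shows "set_integrable lborel S f"
proof (rule set_integrable_bound)
  show "set_integrable lborel S (\<lambda>x. 1 + (f x)\<^sup>2)"
    using assms set_integrable_const unfolding L2_def by (intro set_integral_add(1)) auto
  show "set_borel_measurable lborel S f" using assms by (simp add: L2_def)
  show "AE x in lborel. x \<in> S \<longrightarrow> norm (f x) \<le> norm (1 + (f x)\<^sup>2)"
  proof (intro AE_I2 impI)
    fix x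
    have "\<bar>f x\<bar> \<le> 1 + (f x)\<^sup>2"
    proof (cases "\<bar>f x\<bar> \<le> 1")
      case True then show ?thesis by (smt (verit) zero_le_power2)
    next
      case False then have "\<bar>f x\<bar> * 1 \<le> \<bar>f x\<bar> * \<bar>f x\<bar>" by (intro mult_left_mono) auto
      then show ?thesis using abs_mult_self_eq[of "f x"] by (simp add: power2_eq_square)
    qed
    then show "norm (f x) \<le> norm (1 + (f x)\<^sup>2)" by simp
  qed
qed

lemma L2_set_integrable_mult:
  assumes f: "L2 S f" and g: "L2 S g" shows "set_integrable lborel S (\<lambda>x. f x * g x)"
proof (rule set_integrable_bound)
  show "set_integrable lborel S (\<lambda>x. (f x)\<^sup>2 + (g x)\<^sup>2)"
    using assms unfolding L2_def by (intro set_integral_add(1)) auto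
  show "set_borel_measurable lborel S (\<lambda>x. f x * g x)" using assms by (intro set_borel_measurable_mult) (simp_all add: L2_def)
  show "AE x in lborel. x \<in> S \<longrightarrow> norm (f x * g x) \<le> norm ((f x)\<^sup>2 + (g x)\<^sup>2)"
  proof (intro AE_I2 impI)
    fix x
    have "\<bar>f x * g x\<bar> \<le> (f x)\<^sup>2 + (g x)\<^sup>2"
    proof -
      have "0 \<le> (\<bar>f x\<bar> - \<bar>g x\<bar>)\<^sup>2" by simp
      then have "2 * (\<bar>f x\<bar> * \<bar>g x\<bar>) \<le> (f x)\<^sup>2 + (g x)\<^sup>2"
        by (simp add: power2_eq_square algebra_simps abs_mult_self_eq)
      moreover have "0 \<le> \<bar>f x\<bar> * \<bar>g x\<bar>" by simp
      ultimately have "\<bar>f x\<bar> * \<bar>g x\<bar> \<le> (f x)\<^sup>2 + (g x)\<^sup>2" by linarith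
      then show ?thesis by (simp add: abs_mult)
    qed
    then show "norm (f x * g x) \<le> norm ((f x)\<^sup>2 + (g x)\<^sup>2)" by simp
  qed
qed

lemma L2_lin_comb:
  assumes f: "L2 S f" and g: "L2 S g" shows "L2 S (\<lambda>x. a * f x + b * g x)"
  unfolding L2_def
proof
  show "set_borel_measurable lborel S (\<lambda>x. a * f x + b * g x)"
    using f g by (intro set_borel_measurable_add set_borel_measurable_cmult) (simp_all add: L2_def)
  show "set_integrable lborel S (\<lambda>x. (a * f x + b * g x)\<^sup>2)"
  proof (rule set_integrable_bound)
    show "set_integrable lborel S (\<lambda>x. 2 * a\<^sup>2 * (f x)\<^sup>2 + 2 * b\<^sup>2 * (g x)\<^sup>2)"
      using assms unfolding L2_def by (intro set_integral_add(1) set_integrable_mult_right) auto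
    show "set_borel_measurable lborel S (\<lambda>x. (a * f x + b * g x)\<^sup>2)"
      using f g unfolding power2_eq_square by (intro set_borel_measurable_mult set_borel_measurable_add set_borel_measurable_cmult) (simp_all add: L2_def)
    show "AE x in lborel. x \<in> S \<longrightarrow> norm ((a * f x + b * g x)\<^sup>2) \<le> norm (2 * a\<^sup>2 * (f x)\<^sup>2 + 2 * b\<^sup>2 * (g x)\<^sup>2)"
    proof (intro AE_I2 impI)
      fix x
      have "(a * f x + b * g x)\<^sup>2 \<le> 2 * a\<^sup>2 * (f x)\<^sup>2 + 2 * b\<^sup>2 * (g x)\<^sup>2"
      proof -
        have "0 \<le> (a * f x - b * g x)\<^sup>2" by simp
        then show ?thesis by (simp add: power2_eq_square algebra_simps)
      qed
      then show "norm ((a * f x + b * g x)\<^sup>2) \<le> norm (2 * a\<^sup>2 * (f x)\<^sup>2 + 2 * b\<^sup>2 * (g x)\<^sup>2)" by simp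
    qed
  qed
qed

lemma L2_bounded:
  assumes "set_borel_measurable lborel S f" "\<And>x. x \<in> S \<Longrightarrow> \<bar>f x\<bar> \<le> B"
  shows "L2 S f"
  unfolding L2_def
proof
  show "set_borel_measurable lborel S f" by fact
  show "set_integrable lborel S (\<lambda>x. (f x)\<^sup>2)"
  proof (rule set_integrable_bound)
    show "set_integrable lborel S (\<lambda>x. B\<^sup>2)" by (rule set_integrable_const)
    show "set_borel_measurable lborel S (\<lambda>x. (f x)\<^sup>2)" unfolding power2_eq_square by (rule set_borel_measurable_mult[OF assms(1) assms(1)])
    show "AE x in lborel. x \<in> S \<longrightarrow> norm ((f x)\<^sup>2) \<le> norm (B\<^sup>2)"
    proof (intro AE_I2 impI)
      fix x assume "x \<in> S"
      then have "\<bar>f x\<bar> \<le> B" by (rule assms(2))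
      then have "(f x)\<^sup>2 \<le> B\<^sup>2" by (metis abs_ge_zero abs_le_square_iff abs_of_nonneg order_trans)
      then show "norm ((f x)\<^sup>2) \<le> norm (B\<^sup>2)" by simp
    qed
  qed
qed

lemma L2_continuous_bounded:
  assumes "continuous_on UNIV f" "\<And>x. x \<in> S \<Longrightarrow> \<bar>f x\<bar> \<le> B"
  shows "L2 S f"
  by (rule L2_bounded[OF set_borel_measurable_continuous[OF assms(1)] assms(2)])

lemma L2_zero: "L2 S (\<lambda>x. 0)" by (rule L2_bounded[where B=0]) (auto simp: set_borel_measurable_const)

lemma L2_sum:
  assumes "finite F" "\<And>k. k \<in> F \<Longrightarrow> L2 S (f k)"
  shows "L2 S (\<lambda>x. \<Sum>k\<in>F. c k * f k x)"
  using assms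
proof (induction F rule: finite_induct)
  case empty then show ?case by (simp add: L2_zero)
next
  case (insert k F)
  have ih: "L2 S (\<lambda>x. \<Sum>k\<in>F. c k * f k x)" using insert.IH insert.prems by blast
  have "L2 S (\<lambda>x. c k * f k x + 1 * (\<Sum>k\<in>F. c k * f k x))"
    by (rule L2_lin_comb[OF _ ih]) (use insert.prems in auto)
  then show ?case using insert by simp
qed

lemma set_integral_lin_comb_mult:
  assumes f: "L2 S f" and g: "L2 S g" and h: "L2 S h"
  shows "(LINT x:S|lborel. (a * f x + b * g x) * h x) = a * (LINT x:S|lborel. f x * h x) + b * (LINT x:S|lborel. g x * h x)"
proof -
  have i1: "set_integrable lborel S (\<lambda>x. f x * h x)" by (rule L2_set_integrable_mult[OF f h])
  have i2: "set_integrable lborel S (\<lambda>x. g x * h x)" by (rule L2_set_integrable_mult[OF g h])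
  have "(LINT x:S|lborel. (a * f x + b * g x) * h x) = (LINT x:S|lborel. a * (f x * h x) + b * (g x * h x))"
    by (simp add: algebra_simps)
  also have "\<dots> = (LINT x:S|lborel. a * (f x * h x)) + (LINT x:S|lborel. b * (g x * h x))"
    using i1 i2 by (intro set_integral_add(2)) auto
  also have "\<dots> = a * (LINT x:S|lborel. f x * h x) + b * (LINT x:S|lborel. g x * h x)" by simp
  finally show ?thesis .
qed

lemma abs_set_integral_mult_le:
  assumes g: "L2 S g" and f: "L2 S f" and bound: "\<And>x. x \<in> S \<Longrightarrow> \<bar>g x\<bar> \<le> e"
  shows "\<bar>LINT x:S|lborel. g x * f x\<bar> \<le> e * (LINT x:S|lborel. \<bar>f x\<bar>)"
proof -
  have gf: "set_integrable lborel S (\<lambda>x. g x * f x)" by (rule L2_set_integrable_mult[OF g f])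
  have "\<bar>LINT x:S|lborel. g x * f x\<bar> \<le> (LINT x:S|lborel. norm (g x * f x))"
    using set_integral_norm_bound[OF gf] by simp
  also have "\<dots> \<le> (LINT x:S|lborel. e * \<bar>f x\<bar>)"
  proof (rule set_integral_mono)
    show "set_integrable lborel S (\<lambda>x. norm (g x * f x))"
      using gf by (simp add: set_integrable_abs)
    show "set_integrable lborel S (\<lambda>x. e * \<bar>f x\<bar>)"
      using L2_set_integrable[OF f] by (simp add: set_integrable_abs)
    show "norm (g x * f x) \<le> e * \<bar>f x\<bar>" if "x \<in> S" for x
      using bound[OF that] by (simp add: abs_mult mult_right_mono)
  qed
  also have "\<dots> = e * (LINT x:S|lborel. \<bar>f x\<bar>)" by simp
  finally show ?thesis .
qed

lemma set_integral_sum_mult: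
  assumes "finite F" "\<And>k. k \<in> F \<Longrightarrow> L2 S (f k)" and h: "L2 S h"
  shows "(LINT x:S|lborel. (\<Sum>k\<in>F. c k * f k x) * h x) = (\<Sum>k\<in>F. c k * (LINT x:S|lborel. f k x * h x))"
  using assms(1,2)
proof (induction F rule: finite_induct)
  case empty then show ?case by simp
next
  case (insert k F)
  have "(LINT x:S|lborel. (\<Sum>k\<in>insert k F. c k * f k x) * h x) =
        (LINT x:S|lborel. (c k * f k x + 1 * (\<Sum>k\<in>F. c k * f k x)) * h x)"
    using insert by simp
  also have "\<dots> = c k * (LINT x:S|lborel. f k x * h x) + 1 * (LINT x:S|lborel. (\<Sum>k\<in>F. c k * f k x) * h x)"
    by (rule set_integral_lin_comb_mult) (auto intro!: L2_sum insert.hyps insert.prems h)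
  also have "\<dots> = (\<Sum>k\<in>insert k F. c k * (LINT x:S|lborel. f k x * h x))" using insert by simp
  finally show ?case .
qed

lemma set_integral_mult_cong_AE:
  fixes f g h :: "'a \<Rightarrow> real"
  assumes f: "set_borel_measurable lborel S f" and g: "set_borel_measurable lborel S g"
    and h: "set_borel_measurable lborel S h"
    and ae: "AE x in lborel. x \<in> S \<longrightarrow> f x = g x"
  shows "(LINT x:S|lborel. f x * h x) = (LINT x:S|lborel. g x * h x)"
proof -
  have m1: "(\<lambda>x. indicator S x *\<^sub>R (f x * h x)) \<in> borel_measurable lborel"
    using set_borel_measurable_mult[OF f h] by (simp add: set_borel_measurable_def)
  have m2: "(\<lambda>x. indicator S x *\<^sub>R (g x * h x)) \<in> borel_measurable lborel"
    using set_borel_measurable_mult[OF g h] by (simp add: set_borel_measurable_def)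
  show ?thesis unfolding set_lebesgue_integral_def
    by (rule integral_cong_AE[OF m1 m2]) (use ae in \<open>auto elim!: AE_mp\<close>)
qed

end

interpretation I: finite_lborel_set I_int
  by unfold_locales (auto simp: I_int_def)

interpretation Omega: finite_lborel_set Omega
proof
  show "Omega \<in> sets lborel" unfolding Omega_def by (simp add: open_Times)
  have "emeasure lborel Omega = emeasure (lborel \<Otimes>\<^sub>M lborel) ({-1<..<1::real} \<times> {0<..<1::real})"
    by (simp add: lborel_prod Omega_def)
  also have "\<dots> = emeasure lborel {-1<..<1::real} * emeasure lborel {0<..<1::real}"
    by (rule sigma_finite_measure.emeasure_pair_measure_Times) (auto intro: sigma_finite_lborel)
  finally show "emeasure lborel Omega < \<infinity>" by (simp add: ennreal_mult_less_top)
qed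

definition coeffO :: "(real \<times> real \<Rightarrow> real) \<Rightarrow> nat \<Rightarrow> nat \<Rightarrow> real" where
  "coeffO w i j = ipO w (w_fun i j)"

definition trace_coeff :: "(real \<times> real \<Rightarrow> real) \<Rightarrow> nat \<Rightarrow> real" where
  "trace_coeff w i = (\<Sum>j. coeffO w i j * c2 j)"

lemma abs_u_fun_le: "\<bar>u_fun i x\<bar> \<le> 1"
  by (auto simp: u_fun_def c1_def abs_mult intro: mult_le_one)

lemma abs_v_fun_le: "\<bar>v_fun j y\<bar> \<le> 2"
proof -
  have "sqrt 2 \<le> 2" by (rule real_le_lsqrt) auto
  then have "\<bar>c2 j\<bar> \<le> 2" by (auto simp: c2_def)
  then show ?thesis
    unfolding v_fun_def abs_mult using mult_mono[of "\<bar>c2 j\<bar>" 2 "\<bar>cos (real j * pi * y)\<bar>" 1] by simp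
qed

lemma L2_u_fun: "L2 I_int (u_fun i)"
  by (rule I.L2_continuous_bounded[OF continuous_on_u_fun abs_u_fun_le])

lemma L2_w_fun: "L2 Omega (w_fun i j)"
proof (rule Omega.L2_continuous_bounded[OF continuous_on_w_fun])
  fix p show "\<bar>w_fun i j p\<bar> \<le> 2"
    unfolding w_fun_def abs_mult using mult_mono[OF abs_u_fun_le abs_v_fun_le] by simp
qed

lemma ipI_eq_set_integral: "ipI f g = (LINT x:I_int|lborel. f x * g x)"
  by (simp add: ipI_def)

lemma ipO_eq_set_integral: "ipO f g = (LINT p:Omega|lborel. f p * g p)"
  by (simp add: ipO_def)

lemma lin_comb_w_fun_eq:
  "(\<lambda>p. \<Sum>(i,j)\<in>F. a i j * w_fun i j p) = (\<lambda>p. \<Sum>q\<in>F. case_prod a q * case_prod w_fun q p)"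
  by (auto simp: fun_eq_iff case_prod_beta intro!: sum.cong)

lemma L2_lin_comb_w_fun:
  assumes "finite F" shows "L2 Omega (\<lambda>p. \<Sum>(i,j)\<in>F. a i j * w_fun i j p)"
  unfolding lin_comb_w_fun_eq by (rule Omega.L2_sum[OF assms]) (auto simp: L2_w_fun)

lemma coeffO_lin_comb_w_fun:
  assumes F: "finite F"
  shows "coeffO (\<lambda>p. \<Sum>(i,j)\<in>F. a i j * w_fun i j p) k l = (if (k, l) \<in> F then a k l else 0)"
proof -
  have "coeffO (\<lambda>p. \<Sum>(i,j)\<in>F. a i j * w_fun i j p) k l =
     (\<Sum>q\<in>F. case_prod a q * (LINT p:Omega|lborel. case_prod w_fun q p * w_fun k l p))"
    unfolding coeffO_def ipO_eq_set_integral lin_comb_w_fun_eq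
    by (rule Omega.set_integral_sum_mult[OF F]) (auto simp: L2_w_fun)
  also have "\<dots> = (\<Sum>q\<in>F. if q = (k, l) then case_prod a q else 0)"
    by (intro sum.cong refl) (auto simp: ipO_eq_set_integral[symmetric] ipO_w_fun split: if_split_asm)
  also have "\<dots> = (if (k, l) \<in> F then a k l else 0)"
    using F by (simp add: sum.delta)
  finally show ?thesis .
qed

lemma lin_comb_w_fun_in_XsO:
  assumes F: "finite F"
  shows "(\<lambda>p. \<Sum>(i,j)\<in>F. a i j * w_fun i j p) \<in> XsO s"
proof -
  let ?w = "\<lambda>p. \<Sum>(i,j)\<in>F. a i j * w_fun i j p"
  let ?G = "\<lambda>(i,j). (1 - lamO i j) powr (2 * s) * (ipO ?w (w_fun i j))\<^sup>2"
  have "?G summable_on F" using F by simp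
  then have "?G summable_on UNIV"
  proof (rule summable_on_cong_neutral[THEN iffD1, rotated -1])
    fix q assume "q \<in> UNIV - F"
    then show "?G q = 0"
      using coeffO_lin_comb_w_fun[OF F, of a] by (auto simp: coeffO_def split: prod.splits)
  qed auto
  then show ?thesis using L2_lin_comb_w_fun[OF F] by (simp add: XsO_def L2O_eq)
qed

lemma finite_comb_in_XsO: "finite_comb w \<Longrightarrow> w \<in> XsO s"
  unfolding finite_comb_def using lin_comb_w_fun_in_XsO by blast

lemma Tr_lin_comb_w_fun:
  "Tr (\<lambda>p. \<Sum>(i,j)\<in>F. a i j * w_fun i j p) = (\<lambda>x. \<Sum>q\<in>F. (\<lambda>(i,j). a i j * c2 j) q * u_fun (fst q) x)"
  by (auto simp: fun_eq_iff Tr_def w_fun_def v_fun_def case_prod_beta intro!: sum.cong)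

lemma trace_coeff_lin_comb_w_fun:
  assumes F: "finite F"
  shows "trace_coeff (\<lambda>p. \<Sum>(i,j)\<in>F. a i j * w_fun i j p) k = (\<Sum>j\<in>{j. (k, j) \<in> F}. a k j * c2 j)"
proof -
  have fin: "finite {j. (k, j) \<in> F}"
    using F by (rule finite_subset[rotated, OF finite_imageI]) force
  have "trace_coeff (\<lambda>p. \<Sum>(i,j)\<in>F. a i j * w_fun i j p) k = (\<Sum>j. (if (k, j) \<in> F then a k j else 0) * c2 j)"
    unfolding trace_coeff_def coeffO_lin_comb_w_fun[OF F] ..
  also have "\<dots> = (\<Sum>j\<in>{j. (k, j) \<in> F}. (if (k, j) \<in> F then a k j else 0) * c2 j)"
    by (rule suminf_finite[OF fin]) auto
  finally show ?thesis by simp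
qed

lemma ipI_Tr_lin_comb_w_fun:
  assumes F: "finite F"
  shows "ipI (Tr (\<lambda>p. \<Sum>(i,j)\<in>F. a i j * w_fun i j p)) (u_fun k) =
    trace_coeff (\<lambda>p. \<Sum>(i,j)\<in>F. a i j * w_fun i j p) k"
proof -
  have "ipI (Tr (\<lambda>p. \<Sum>(i,j)\<in>F. a i j * w_fun i j p)) (u_fun k) =
      (\<Sum>q\<in>F. (\<lambda>(i,j). a i j * c2 j) q * (LINT x:I_int|lborel. u_fun (fst q) x * u_fun k x))"
    unfolding ipI_eq_set_integral Tr_lin_comb_w_fun
    by (rule I.set_integral_sum_mult[OF F]) (auto simp: L2_u_fun)
  also have "\<dots> = (\<Sum>q\<in>F. if fst q = k then (\<lambda>(i,j). a i j * c2 j) q else 0)"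
    by (intro sum.cong refl) (auto simp: ipI_eq_set_integral[symmetric] ipI_u_fun)
  also have "\<dots> = (\<Sum>q\<in>{q\<in>F. fst q = k}. (\<lambda>(i,j). a i j * c2 j) q)"
    using F by (simp add: sum.inter_filter)
  also have "{q\<in>F. fst q = k} = Pair k ` {j. (k, j) \<in> F}" by force
  also have "(\<Sum>q\<in>Pair k ` {j. (k, j) \<in> F}. (\<lambda>(i,j). a i j * c2 j) q) =
      (\<Sum>j\<in>{j. (k, j) \<in> F}. a k j * c2 j)"
    by (subst sum.reindex) (auto simp: inj_on_def)
  finally show ?thesis unfolding trace_coeff_lin_comb_w_fun[OF F] .
qed

lemma finite_comb_Tr:
  assumes "finite_comb w"
  shows "L2 I_int (Tr w)" and "ipI (Tr w) (u_fun i) = trace_coeff w i"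
proof -
  obtain F a where F: "finite F" and w: "w = (\<lambda>p. \<Sum>(i,j)\<in>F. a i j * w_fun i j p)"
    using assms unfolding finite_comb_def by blast
  show "L2 I_int (Tr w)"
    unfolding w Tr_lin_comb_w_fun by (rule I.L2_sum[OF F]) (auto simp: L2_u_fun)
  show "ipI (Tr w) (u_fun i) = trace_coeff w i"
    unfolding w by (rule ipI_Tr_lin_comb_w_fun[OF F])
qed

subsection \<open>The trace estimate\<close>

definition normO_term :: "real \<Rightarrow> (real \<times> real \<Rightarrow> real) \<Rightarrow> nat \<Rightarrow> nat \<Rightarrow> real" where
  "normO_term s w i j = (1 - lamO i j) powr (2 * s) * (coeffO w i j)\<^sup>2"

definition trace_const :: "real \<Rightarrow> real" where
  "trace_const s = 2 * (3 + 1 / (4 * s - 1))"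

lemma trace_const_pos: "s > 1/4 \<Longrightarrow> trace_const s > 0"
  by (simp add: trace_const_def add_pos_pos)

lemma one_le_one_minus_lamI: "1 \<le> 1 - lamI i"
  by (simp add: lamI_def)

lemma one_le_one_minus_lamI_powr: "s \<ge> 0 \<Longrightarrow> 1 \<le> (1 - lamI i) powr s"
  using one_le_one_minus_lamI[of i] by (intro ge_one_powr_ge_zero) auto

lemma one_minus_lamO: "1 - lamO i j = (1 - lamI i) + (real j * pi)\<^sup>2"
  by (simp add: lamO_def lamI_def)

lemma normO_term_nonneg: "normO_term s w i j \<ge> 0"
  by (simp add: normO_term_def)

lemma summable_on_normO_term: "w \<in> XsO s \<Longrightarrow> (\<lambda>(i,j). normO_term s w i j) summable_on UNIV"
  by (simp add: XsO_def normO_term_def coeffO_def)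

lemma normO_nonneg: "normO s w \<ge> 0"
  unfolding normO_def by (intro real_sqrt_ge_zero infsum_nonneg) auto

lemma normO_squared: "(normO s w)\<^sup>2 = (\<Sum>\<^sub>\<infinity>(i,j)\<in>UNIV. normO_term s w i j)"
proof -
  have "(\<Sum>\<^sub>\<infinity>(i,j)\<in>UNIV. normO_term s w i j) \<ge> 0"
    by (intro infsum_nonneg) (auto simp: normO_term_nonneg)
  then show ?thesis by (simp add: normO_def normO_term_def coeffO_def)
qed

text \<open>Cauchy--Schwarz with the weights \<open>(1 - \<lambda>\<^sub>i\<^sub>j)\<^bsup>2s\<^esup>\<close>; the dual weights sum to
  \<open>O((1 - \<lambda>\<^sub>i)\<^bsup>1/2 - 2s\<^esup>)\<close>, which is where the loss of \<open>1/4\<close> derivative comes from.\<close>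

lemma weighted_row_sum_bound:
  fixes s :: real and a :: "nat \<Rightarrow> real" and i n :: nat
  assumes s: "s > 1/4"
  shows "(1 - lamI i) powr (2 * (s - 1/4)) * (\<Sum>j<n. \<bar>a j\<bar> * c2 j)\<^sup>2 \<le>
         trace_const s * (\<Sum>j<n. (1 - lamO i j) powr (2 * s) * (a j)\<^sup>2)"
proof -
  define A where "A = 1 - lamI i"
  have A: "A \<ge> 1" unfolding A_def by (rule one_le_one_minus_lamI)
  define W where "W j = (A + (real j * pi)\<^sup>2) powr (2 * s)" for j
  have W_pos: "W j > 0" for j
  proof -
    have "A + (real j * pi)\<^sup>2 > 0" using A by (simp add: add_pos_nonneg)
    then show ?thesis unfolding W_def by simp
  qed
  have "(\<Sum>j<n. \<bar>a j\<bar> * c2 j)\<^sup>2 = (\<Sum>j<n. (sqrt (W j) * \<bar>a j\<bar>) * (c2 j / sqrt (W j)))\<^sup>2"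
    using W_pos by (intro arg_cong[where f="\<lambda>x. x\<^sup>2"] sum.cong) (auto simp: field_simps less_imp_neq[symmetric])
  also have "\<dots> \<le> (\<Sum>j<n. (sqrt (W j) * \<bar>a j\<bar>)\<^sup>2) * (\<Sum>j<n. (c2 j / sqrt (W j))\<^sup>2)"
    by (rule Cauchy_Schwarz_ineq_sum)
  also have "\<dots> \<le> (\<Sum>j<n. W j * (a j)\<^sup>2) * (trace_const s * A powr (1/2 - 2 * s))"
  proof (rule mult_mono)
    show "(\<Sum>j<n. (sqrt (W j) * \<bar>a j\<bar>)\<^sup>2) \<le> (\<Sum>j<n. W j * (a j)\<^sup>2)"
      using W_pos by (simp add: power_mult_distrib less_imp_le)
    have "(\<Sum>j<n. (c2 j / sqrt (W j))\<^sup>2) = (\<Sum>j<n. (c2 j)\<^sup>2 * (A + (real j * pi)\<^sup>2) powr (- 2 * s))"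
    proof (intro sum.cong refl)
      fix j
      have "(c2 j / sqrt (W j))\<^sup>2 = (c2 j)\<^sup>2 / W j" using W_pos[of j] by (simp add: power_divide)
      then show "(c2 j / sqrt (W j))\<^sup>2 = (c2 j)\<^sup>2 * (A + (real j * pi)\<^sup>2) powr (- 2 * s)"
        unfolding W_def by (simp add: powr_minus_divide divide_inverse)
    qed
    also have "\<dots> \<le> (\<Sum>j<n. 2 * (A + (real j * pi)\<^sup>2) powr (- 2 * s))"
      by (intro sum_mono mult_right_mono) (auto simp: c2_def)
    also have "\<dots> \<le> 2 * ((3 + 1 / (4 * s - 1)) * A powr (1/2 - 2 * s))"
      using sum_powr_shifted_squares_le[OF s A] by (simp add: sum_distrib_left[symmetric])
    also have "\<dots> = trace_const s * A powr (1/2 - 2 * s)"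
      by (simp add: trace_const_def)
    finally show "(\<Sum>j<n. (c2 j / sqrt (W j))\<^sup>2) \<le> trace_const s * A powr (1/2 - 2 * s)" .
  qed (use W_pos in \<open>auto intro!: sum_nonneg simp: less_imp_le\<close>)
  finally have "A powr (2 * (s - 1/4)) * (\<Sum>j<n. \<bar>a j\<bar> * c2 j)\<^sup>2 \<le>
      A powr (2 * (s - 1/4)) * ((\<Sum>j<n. W j * (a j)\<^sup>2) * (trace_const s * A powr (1/2 - 2 * s)))"
    by (rule mult_left_mono) simp
  also have "\<dots> = trace_const s * (\<Sum>j<n. W j * (a j)\<^sup>2) * (A powr (2 * (s - 1/4)) * A powr (1/2 - 2 * s))"
    by (simp add: ac_simps)
  also have "A powr (2 * (s - 1/4)) * A powr (1/2 - 2 * s) = 1"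
    using A by (simp flip: powr_add)
  finally show ?thesis unfolding A_def W_def one_minus_lamO by simp
qed

lemma summable_on_nat_prod_rows:
  fixes G :: "nat \<Rightarrow> nat \<Rightarrow> real"
  assumes nonneg: "\<And>i j. G i j \<ge> 0" and sm: "(\<lambda>(i,j). G i j) summable_on UNIV"
  shows "summable (G i)" and "(\<lambda>i. suminf (G i)) sums (\<Sum>\<^sub>\<infinity>(i,j)\<in>UNIV. G i j)"
proof -
  have sm': "(\<lambda>(i,j). G i j) summable_on Sigma UNIV (\<lambda>_. UNIV)" using sm by simp
  have rows: "G i summable_on UNIV" for i by (rule summable_on_SigmaD1[OF sm']) simp
  then show "summable (G i)" using summable_on_imp_summable by blast
  have eq: "infsum (G i) UNIV = suminf (G i)" for i
    using has_sum_imp_sums[OF has_sum_infsum[OF rows[of i]]] by (simp add: sums_iff)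
  have "((\<lambda>i. infsum (G i) UNIV) has_sum (\<Sum>\<^sub>\<infinity>(i,j)\<in>UNIV. G i j)) UNIV"
  proof (rule has_sum_SigmaD[where B="\<lambda>_. UNIV"])
    show "((\<lambda>(i,j). G i j) has_sum (\<Sum>\<^sub>\<infinity>(i,j)\<in>UNIV. G i j)) (Sigma UNIV (\<lambda>_. UNIV))"
      using has_sum_infsum[OF sm] by simp
    show "((\<lambda>y. (\<lambda>(i,j). G i j) (x, y)) has_sum infsum (G x) UNIV) UNIV" for x
      using has_sum_infsum[OF rows[of x]] by simp
  qed
  then show "(\<lambda>i. suminf (G i)) sums (\<Sum>\<^sub>\<infinity>(i,j)\<in>UNIV. G i j)"
    using has_sum_imp_sums eq by simp
qed

lemma trace_coeff_row_bound:
  assumes s: "s > 1/4" and row: "summable (normO_term s w i)"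
  shows "summable (\<lambda>j. \<bar>coeffO w i j * c2 j\<bar>)"
    and "(1 - lamI i) powr (2 * (s - 1/4)) * (trace_coeff w i)\<^sup>2 \<le> trace_const s * suminf (normO_term s w i)"
proof -
  define nu where "nu = (1 - lamI i) powr (2 * (s - 1/4))"
  have nu: "nu \<ge> 1" unfolding nu_def using s by (intro one_le_one_minus_lamI_powr) auto
  define B where "B = sqrt (trace_const s * suminf (normO_term s w i) / nu)"
  have abs_eq: "\<bar>coeffO w i j * c2 j\<bar> = \<bar>coeffO w i j\<bar> * c2 j" for j
    by (simp add: abs_mult c2_def)
  have partial: "(\<Sum>j<n. \<bar>coeffO w i j * c2 j\<bar>) \<le> B" for n
  proof -
    have "nu * (\<Sum>j<n. \<bar>coeffO w i j\<bar> * c2 j)\<^sup>2 \<le> trace_const s * (\<Sum>j<n. normO_term s w i j)"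
      unfolding nu_def normO_term_def by (rule weighted_row_sum_bound[OF s])
    also have "\<dots> \<le> trace_const s * suminf (normO_term s w i)"
      using trace_const_pos[OF s] normO_term_nonneg
      by (intro mult_left_mono sum_le_suminf row) auto
    finally show ?thesis
      using nu unfolding B_def abs_eq by (intro real_le_rsqrt) (simp add: field_simps)
  qed
  show abs_summable: "summable (\<lambda>j. \<bar>coeffO w i j * c2 j\<bar>)"
    by (rule summableI_nonneg_bounded[where x=B]) (use partial in auto)
  have "\<bar>trace_coeff w i\<bar> \<le> (\<Sum>j. \<bar>coeffO w i j * c2 j\<bar>)"
    unfolding trace_coeff_def by (rule summable_rabs[OF abs_summable])
  also have "\<dots> \<le> B" by (rule suminf_le_const[OF abs_summable partial])
  finally have "(trace_coeff w i)\<^sup>2 \<le> B\<^sup>2" by (metis power2_abs abs_ge_zero power_mono)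
  also have "B\<^sup>2 = trace_const s * suminf (normO_term s w i) / nu"
    unfolding B_def using trace_const_pos[OF s] nu row
    by (simp add: suminf_nonneg normO_term_nonneg)
  finally show "(1 - lamI i) powr (2 * (s - 1/4)) * (trace_coeff w i)\<^sup>2 \<le> trace_const s * suminf (normO_term s w i)"
    using nu unfolding nu_def[symmetric] by (simp add: field_simps)
qed

lemma trace_coeff_weighted_bound:
  assumes s: "s > 1/4" and w: "w \<in> XsO s"
  shows "summable (\<lambda>i. (1 - lamI i) powr (2 * (s - 1/4)) * (trace_coeff w i)\<^sup>2)"
    and "(\<Sum>i. (1 - lamI i) powr (2 * (s - 1/4)) * (trace_coeff w i)\<^sup>2) \<le> trace_const s * (normO s w)\<^sup>2"
proof -
  note rows = summable_on_nat_prod_rows[OF normO_term_nonneg summable_on_normO_term[OF w]]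
  have bound: "(1 - lamI i) powr (2 * (s - 1/4)) * (trace_coeff w i)\<^sup>2 \<le> trace_const s * suminf (normO_term s w i)" for i
    by (rule trace_coeff_row_bound(2)[OF s rows(1)])
  have total: "(\<lambda>i. trace_const s * suminf (normO_term s w i)) sums (trace_const s * (normO s w)\<^sup>2)"
    unfolding normO_squared by (intro sums_mult rows(2))
  show summable: "summable (\<lambda>i. (1 - lamI i) powr (2 * (s - 1/4)) * (trace_coeff w i)\<^sup>2)"
    by (rule summable_comparison_test'[OF sums_summable[OF total]]) (use bound in auto)
  show "(\<Sum>i. (1 - lamI i) powr (2 * (s - 1/4)) * (trace_coeff w i)\<^sup>2) \<le> trace_const s * (normO s w)\<^sup>2"
    using suminf_le[OF bound summable sums_summable[OF total]] total by (simp add: sums_iff)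
qed

subsection \<open>Completeness of the cosine system on \<open>I\<close>\<close>

lemma ramp_tendsto_indicator_Ioi:
  fixes a x :: real
  shows "(\<lambda>n. min 1 (max 0 (real n * (x - a)))) \<longlonglongrightarrow> indicator {a<..} x"
proof (cases "x \<le> a")
  case True
  then show ?thesis by (simp add: mult_nonneg_nonpos)
next
  case False
  obtain N :: nat where N: "real N > 1 / (x - a)" using reals_Archimedean2 by blast
  have "min 1 (max 0 (real n * (x - a))) = indicator {a<..} x" if "N \<le> n" for n
  proof -
    have "real n > 1 / (x - a)" using N that by linarith
    then have "real n * (x - a) > 1" using False by (simp add: field_simps)
    then show ?thesis using False by simp
  qed
  then show ?thesis by (intro tendsto_eventually eventually_sequentiallyI)
qed

lemma integral_Ioi_eq_0_if_orthogonal_continuous: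
  fixes F :: "real \<Rightarrow> real"
  assumes F: "integrable lborel F"
    and orth: "\<And>g. continuous_on UNIV g \<Longrightarrow> integral\<^sup>L lborel (\<lambda>x. F x * g x) = 0"
  shows "integral\<^sup>L lborel (\<lambda>x. F x * indicator {a<..} x) = 0"
proof -
  have [measurable]: "F \<in> borel_measurable lborel" using F by auto
  define g where "g n x = min 1 (max 0 (real n * (x - a)))" for n :: nat and x :: real
  have g_cont: "continuous_on UNIV (g n)" for n unfolding g_def by (intro continuous_intros)
  have "(\<lambda>n. integral\<^sup>L lborel (\<lambda>x. F x * g n x)) \<longlonglongrightarrow> integral\<^sup>L lborel (\<lambda>x. F x * indicator {a<..} x)"
  proof (rule integral_dominated_convergence[where w="\<lambda>x. norm (F x)"])
    show "(\<lambda>x. F x * indicator {a<..} x) \<in> borel_measurable lborel" by measurable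
    show "(\<lambda>x. F x * g n x) \<in> borel_measurable lborel" for n
      using borel_measurable_continuous_onI[OF g_cont[of n]] by measurable
    show "AE x in lborel. (\<lambda>n. F x * g n x) \<longlonglongrightarrow> F x * indicator {a<..} x"
      unfolding g_def by (intro AE_I2 tendsto_mult tendsto_const ramp_tendsto_indicator_Ioi)
    show "AE x in lborel. norm (F x * g n x) \<le> norm (F x)" for n
      by (intro AE_I2) (auto simp: g_def abs_mult intro!: mult_left_le)
  qed (use F in simp)
  moreover have "integral\<^sup>L lborel (\<lambda>x. F x * g n x) = 0" for n
    by (rule orth[OF g_cont])
  ultimately show ?thesis by (simp add: LIMSEQ_const_iff)
qed

text \<open>The densities \<open>F\<^sup>+\<close> and \<open>F\<^sup>-\<close> define the same measure, as they agree on all half-lines.\<close>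

lemma AE_eq_0_if_integral_Ioi_eq_0:
  fixes F :: "real \<Rightarrow> real"
  assumes F: "integrable lborel F"
    and Ioi: "\<And>a. integral\<^sup>L lborel (\<lambda>x. F x * indicator {a<..} x) = 0"
  shows "AE x in lborel. F x = 0"
proof -
  have F_meas[measurable]: "F \<in> borel_measurable lborel" using F by auto
  have minus_F_meas: "(\<lambda>x. - F x) \<in> borel_measurable lborel" by measurable
  have Ioi_integrable: "integrable lborel (\<lambda>x. F x * indicator {a<..} x)" for a
    using integrable_mult_indicator[of "{a<..}" lborel F] F by (simp add: ac_simps)
  have nn_finite: "(\<integral>\<^sup>+x. ennreal (G x) \<partial>lborel) < \<infinity>" "(\<integral>\<^sup>+x. ennreal (- G x) \<partial>lborel) < \<infinity>"
    if "integrable lborel G" for G :: "real \<Rightarrow> real"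
    using that unfolding real_integrable_def by (auto simp: less_top)
  have emeasure_Ioi: "emeasure (density lborel (\<lambda>x. ennreal (H x))) {a<..} =
      (\<integral>\<^sup>+x. ennreal (H x * indicator {a<..} x) \<partial>lborel)"
    if [measurable]: "H \<in> borel_measurable lborel" for H :: "real \<Rightarrow> real" and a
    by (subst emeasure_density) (auto intro!: nn_integral_cong split: split_indicator)
  have "density lborel (\<lambda>x. ennreal (F x)) = density lborel (\<lambda>x. ennreal (- F x))"
  proof (rule measure_eqI_lessThan)
    fix a :: real
    note G = Ioi_integrable[of a]
    show "emeasure (density lborel (\<lambda>x. ennreal (F x))) {a<..} < \<infinity>"
      unfolding emeasure_Ioi[OF F_meas] using nn_finite(1)[OF G] by simp
    have "(\<integral>\<^sup>+x. ennreal (F x * indicator {a<..} x) \<partial>lborel) =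
        ennreal (enn2real (\<integral>\<^sup>+x. ennreal (F x * indicator {a<..} x) \<partial>lborel))"
      using nn_finite(1)[OF G] by simp
    also have "\<dots> = ennreal (enn2real (\<integral>\<^sup>+x. ennreal (- (F x * indicator {a<..} x)) \<partial>lborel))"
      using real_lebesgue_integral_def[OF G] Ioi[of a] by simp
    also have "\<dots> = (\<integral>\<^sup>+x. ennreal (- (F x * indicator {a<..} x)) \<partial>lborel)"
      using nn_finite(2)[OF G] by simp
    finally have "(\<integral>\<^sup>+x. ennreal (F x * indicator {a<..} x) \<partial>lborel) =
        (\<integral>\<^sup>+x. ennreal (- (F x * indicator {a<..} x)) \<partial>lborel)" .
    then show "emeasure (density lborel (\<lambda>x. ennreal (F x))) {a<..} =
        emeasure (density lborel (\<lambda>x. ennreal (- F x))) {a<..}"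
      unfolding emeasure_Ioi[OF F_meas] emeasure_Ioi[OF minus_F_meas] by simp
  qed simp_all
  then have "AE x in lborel. ennreal (F x) = ennreal (- F x)"
    by (subst sigma_finite_measure.density_unique_iff[OF sigma_finite_lborel, symmetric]) simp_all
  then show ?thesis
  proof (rule AE_mp, intro AE_I2 impI)
    fix x assume "ennreal (F x) = ennreal (- F x)"
    then show "F x = 0"
      by (cases "F x \<ge> 0") (simp_all add: ennreal_neg)
  qed
qed

lemma L2_cos_pow_mult_cos: "L2 I_int (\<lambda>x. cos (pi * (x + 1) / 2) ^ n * cos (real m * pi * (x + 1) / 2))"
  by (rule I.L2_continuous_bounded[where B=1])
     (auto intro!: continuous_intros mult_le_one power_le_one simp: abs_mult power_abs)

lemma cos_pow_Suc_mult_cos: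
  fixes t :: real
  shows "cos t ^ Suc n * cos (real m * t) =
    1/2 * (cos t ^ n * cos (real (if m \<le> 1 then 1 - m else m - 1) * t)) + 1/2 * (cos t ^ n * cos (real (1 + m) * t))"
proof -
  obtain d where d: "d = (if m \<le> 1 then 1 - m else m - 1)" by simp
  have "cos (real 1 * t) * cos (real m * t) = (cos (real d * t) + cos (real (1 + m) * t)) / 2"
    unfolding d by (rule cos_mult_cos_nat)
  then have "cos t ^ Suc n * cos (real m * t) = cos t ^ n * ((cos (real d * t) + cos (real (1 + m) * t)) / 2)"
    by (simp add: mult_ac)
  then show ?thesis unfolding d[symmetric] by (simp add: algebra_simps)
qed

lemma ipI_cos_pow_mult_cos_eq_0:
  assumes f: "L2 I_int f" and orth: "\<And>i. ipI f (u_fun i) = 0"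
  shows "ipI (\<lambda>x. cos (pi * (x + 1) / 2) ^ n * cos (real m * pi * (x + 1) / 2)) f = 0"
proof (induction n arbitrary: m)
  case 0
  have "ipI f (u_fun m) = c1 m * ipI (\<lambda>x. cos (pi * (x + 1) / 2) ^ 0 * cos (real m * pi * (x + 1) / 2)) f"
    unfolding ipI_eq_set_integral u_fun_def by (simp add: ac_simps)
  then show ?case using orth[of m] by (simp add: c1_def split: if_splits)
next
  case (Suc n)
  define d where "d = (if m \<le> 1 then 1 - m else m - 1)"
  have "\<And>k x. real k * pi * (x + 1) / 2 = real k * (pi * (x + 1) / 2)" by simp
  then have split: "cos (pi * (x + 1) / 2) ^ Suc n * cos (real m * pi * (x + 1) / 2) =
      1/2 * (cos (pi * (x + 1) / 2) ^ n * cos (real d * pi * (x + 1) / 2)) +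
      1/2 * (cos (pi * (x + 1) / 2) ^ n * cos (real (1 + m) * pi * (x + 1) / 2))" for x
    unfolding d_def by (simp only: cos_pow_Suc_mult_cos)
  have "ipI (\<lambda>x. cos (pi * (x + 1) / 2) ^ Suc n * cos (real m * pi * (x + 1) / 2)) f =
      1/2 * ipI (\<lambda>x. cos (pi * (x + 1) / 2) ^ n * cos (real d * pi * (x + 1) / 2)) f +
      1/2 * ipI (\<lambda>x. cos (pi * (x + 1) / 2) ^ n * cos (real (1 + m) * pi * (x + 1) / 2)) f"
    unfolding ipI_eq_set_integral split
    by (rule I.set_integral_lin_comb_mult[OF L2_cos_pow_mult_cos L2_cos_pow_mult_cos f])
  then show ?case using Suc.IH[of d] Suc.IH[of "1 + m"] by (simp only: mult_zero_right add_0_left)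
qed

lemma ipI_poly_cos_eq_0:
  assumes f: "L2 I_int f" and orth: "\<And>i. ipI f (u_fun i) = 0"
  shows "ipI (\<lambda>x. \<Sum>i\<le>n. a i * cos (pi * (x + 1) / 2) ^ i) f = 0"
proof -
  have "ipI (\<lambda>x. \<Sum>i\<le>n. a i * cos (pi * (x + 1) / 2) ^ i) f =
      (\<Sum>i\<le>n. a i * ipI (\<lambda>x. cos (pi * (x + 1) / 2) ^ i) f)"
    unfolding ipI_eq_set_integral
    by (rule I.set_integral_sum_mult) (use L2_cos_pow_mult_cos[of _ 0] f in auto)
  also have "\<dots> = 0" using ipI_cos_pow_mult_cos_eq_0[OF f orth, of _ 0] by simp
  finally show ?thesis .
qed

text \<open>Stone--Weierstrass, after the change of variables \<open>y = cos (\<pi>(x + 1)/2)\<close>, which maps \<open>I\<close>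
  bijectively onto \<open>(-1, 1)\<close>.\<close>

lemma uniform_approx_poly_cos:
  assumes g: "continuous_on UNIV g" and e: "e > 0"
  obtains a n where "\<And>x. x \<in> I_int \<Longrightarrow> \<bar>g x - (\<Sum>i\<le>n. a i * cos (pi * (x + 1) / 2) ^ i)\<bar> < e"
proof -
  define h where "h y = g (2 * arccos y / pi - 1)" for y
  have "continuous_on {-1..1} h" unfolding h_def
    by (rule continuous_on_compose2[OF g]) (auto intro!: continuous_intros)
  then obtain P where P: "real_polynomial_function P" "\<And>y. y \<in> {-1..1} \<Longrightarrow> \<bar>h y - P y\<bar> < e"
    using Stone_Weierstrass_real_polynomial_function[OF compact_Icc _ e] by blast
  obtain a n where P_eq: "P = (\<lambda>y. \<Sum>i\<le>n. a i * y ^ i)"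
    using P(1) real_polynomial_function_iff_sum by blast
  show ?thesis
  proof
    fix x assume x: "x \<in> I_int"
    define y where "y = cos (pi * (x + 1) / 2)"
    have "arccos y = pi * (x + 1) / 2"
      unfolding y_def by (rule arccos_cos) (use x in \<open>auto simp: I_int_def\<close>)
    then have "h y = g x" unfolding h_def by (simp add: field_simps)
    then show "\<bar>g x - (\<Sum>i\<le>n. a i * cos (pi * (x + 1) / 2) ^ i)\<bar> < e"
      using P(2)[of y] unfolding P_eq y_def by simp
  qed
qed

lemma eq_0_if_abs_le_eps_mult:
  fixes x c :: real
  assumes "c \<ge> 0" "\<And>e. e > 0 \<Longrightarrow> \<bar>x\<bar> \<le> e * c"
  shows "x = 0"
proof (rule ccontr)
  assume "x \<noteq> 0"
  then have "\<bar>x\<bar> / (c + 1) > 0" using assms(1) by simp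
  then have "\<bar>x\<bar> \<le> (\<bar>x\<bar> / (c + 1)) * c" by (rule assms(2))
  also have "\<dots> < \<bar>x\<bar>" using \<open>x \<noteq> 0\<close> assms(1) by (simp add: field_simps)
  finally show False by simp
qed

lemma ipI_continuous_eq_0:
  assumes f: "L2 I_int f" and orth: "\<And>i. ipI f (u_fun i) = 0" and g: "continuous_on UNIV g"
  shows "ipI g f = 0"
proof (rule eq_0_if_abs_le_eps_mult)
  show "(LINT x:I_int|lborel. \<bar>f x\<bar>) \<ge> 0"
    unfolding set_lebesgue_integral_def by (intro integral_nonneg_AE) (auto simp: indicator_def)
  have "bounded (g ` {-1..1})"
    by (intro compact_imp_bounded compact_continuous_image continuous_on_subset[OF g]) auto
  then obtain B where "\<forall>y\<in>g ` {-1..1}. norm y \<le> B" unfolding bounded_iff by blast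
  then have g_L2: "L2 I_int g"
    by (intro I.L2_continuous_bounded[OF g]) (auto simp: I_int_def)
  fix e :: real assume e: "e > 0"
  obtain a n where close: "\<And>x. x \<in> I_int \<Longrightarrow> \<bar>g x - (\<Sum>i\<le>n. a i * cos (pi * (x + 1) / 2) ^ i)\<bar> < e"
    using uniform_approx_poly_cos[OF g e] by blast
  define Q where "Q x = (\<Sum>i\<le>n. a i * cos (pi * (x + 1) / 2) ^ i)" for x
  have Q_L2: "L2 I_int Q"
  proof (rule I.L2_continuous_bounded)
    show "continuous_on UNIV Q" unfolding Q_def by (auto intro!: continuous_intros)
    show "\<bar>Q x\<bar> \<le> (\<Sum>i\<le>n. \<bar>a i\<bar>)" for x unfolding Q_def
      by (rule order_trans[OF sum_abs], intro sum_mono)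
         (auto simp: abs_mult power_abs intro!: mult_left_le power_le_one)
  qed
  have "ipI g f = ipI g f - ipI Q f"
    using ipI_poly_cos_eq_0[OF f orth] by (simp add: Q_def[abs_def])
  also have "\<dots> = (LINT x:I_int|lborel. (1 * g x + (-1) * Q x) * f x)"
    unfolding ipI_eq_set_integral by (subst I.set_integral_lin_comb_mult[OF g_L2 Q_L2 f]) simp
  finally have eq: "ipI g f = (LINT x:I_int|lborel. (1 * g x + (-1) * Q x) * f x)" .
  show "\<bar>ipI g f\<bar> \<le> e * (LINT x:I_int|lborel. \<bar>f x\<bar>)"
    unfolding eq by (rule I.abs_set_integral_mult_le[OF I.L2_lin_comb[OF g_L2 Q_L2] f])
      (use close in \<open>simp add: Q_def less_imp_le\<close>)
qed

lemma AE_eq_0_if_ipI_u_fun_eq_0: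
  assumes f: "L2 I_int f" and orth: "\<And>i. ipI f (u_fun i) = 0"
  shows "AE x in lborel. x \<in> I_int \<longrightarrow> f x = 0"
proof -
  define F where "F x = indicator I_int x * f x" for x
  have F: "integrable lborel F"
    using I.L2_set_integrable[OF f] unfolding set_integrable_def F_def by simp
  have "integral\<^sup>L lborel (\<lambda>x. F x * g x) = 0" if "continuous_on UNIV g" for g
    using ipI_continuous_eq_0[OF f orth that]
    by (simp add: ipI_def set_lebesgue_integral_def F_def ac_simps)
  then have "AE x in lborel. F x = 0"
    by (intro AE_eq_0_if_integral_Ioi_eq_0 F integral_Ioi_eq_0_if_orthogonal_continuous)
  then show ?thesis by (rule AE_mp) (auto simp: F_def)
qed

lemma AE_eq_if_ipI_u_fun_eq:
  assumes g1: "L2 I_int g1" and g2: "L2 I_int g2" and eq: "\<And>i. ipI g1 (u_fun i) = ipI g2 (u_fun i)"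
  shows "AE x in lborel. x \<in> I_int \<longrightarrow> g1 x = g2 x"
proof -
  have "ipI (\<lambda>x. 1 * g1 x + (-1) * g2 x) (u_fun i) = 0" for i
    unfolding ipI_eq_set_integral I.set_integral_lin_comb_mult[OF g1 g2 L2_u_fun]
    using eq[of i] by (simp add: ipI_eq_set_integral)
  then have "AE x in lborel. x \<in> I_int \<longrightarrow> 1 * g1 x + (-1) * g2 x = 0"
    by (rule AE_eq_0_if_ipI_u_fun_eq_0[OF I.L2_lin_comb[OF g1 g2]])
  then show ?thesis by (rule AE_mp) simp
qed
lemma Fatou_integral_le:
  fixes H :: "nat \<Rightarrow> 'a \<Rightarrow> real" and G :: "'a \<Rightarrow> real"
  assumes H_meas: "\<And>k. H k \<in> borel_measurable M" and G_meas: "G \<in> borel_measurable M"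
    and H_nonneg: "\<And>k x. 0 \<le> H k x" and G_nonneg: "\<And>x. 0 \<le> G x"
    and lim: "AE x in M. (\<lambda>k. H k x) \<longlonglongrightarrow> G x"
    and H_int: "\<And>k. integrable M (H k)" and bound: "\<And>k. integral\<^sup>L M (H k) \<le> B"
  shows "integrable M G" and "integral\<^sup>L M G \<le> B"
proof -
  have B: "B \<ge> 0" using integral_nonneg_AE[of "H 0" M] H_nonneg bound[of 0] by fastforce
  have "AE x in M. ennreal (G x) = liminf (\<lambda>k. ennreal (H k x))"
    using lim
  proof eventually_elim
    case (elim x)
    then have "(\<lambda>k. ennreal (H k x)) \<longlonglongrightarrow> ennreal (G x)" by (rule tendsto_ennrealI)
    then show ?case by (simp add: lim_imp_Liminf)
  qed
  then have "(\<integral>\<^sup>+x. ennreal (G x) \<partial>M) = (\<integral>\<^sup>+x. liminf (\<lambda>k. ennreal (H k x)) \<partial>M)"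
    by (rule nn_integral_cong_AE)
  also have "\<dots> \<le> liminf (\<lambda>k. \<integral>\<^sup>+x. ennreal (H k x) \<partial>M)"
    by (rule nn_integral_liminf) (use H_meas in measurable)
  also have "\<dots> \<le> limsup (\<lambda>k. \<integral>\<^sup>+x. ennreal (H k x) \<partial>M)" by (rule Liminf_le_Limsup) simp
  also have "\<dots> \<le> ennreal B"
  proof (rule Limsup_bounded)
    show "\<forall>\<^sub>F k in sequentially. (\<integral>\<^sup>+x. ennreal (H k x) \<partial>M) \<le> ennreal B"
      using nn_integral_eq_integral[OF H_int] H_nonneg bound by (simp add: ennreal_leI)
  qed
  finally have nn_G: "(\<integral>\<^sup>+x. ennreal (G x) \<partial>M) \<le> ennreal B" .
  show G_int: "integrable M G"
    using nn_G by (intro integrableI_nonneg[OF G_meas]) (auto simp: G_nonneg top.not_eq_extremum intro: le_less_trans)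
  have "ennreal (integral\<^sup>L M G) \<le> ennreal B"
    using nn_G nn_integral_eq_integral[OF G_int] G_nonneg by simp
  then show "integral\<^sup>L M G \<le> B" using B by (simp add: ennreal_le_iff)
qed

lemma (in finite_lborel_set) set_integral_square_le_if_AE_tendsto:
  fixes h :: "nat \<Rightarrow> 'a \<Rightarrow> real" and g :: "'a \<Rightarrow> real"
  assumes "\<And>k. h k \<in> borel_measurable lborel" "g \<in> borel_measurable lborel"
    and lim: "AE x in lborel. x \<in> S \<longrightarrow> (\<lambda>k. h k x) \<longlonglongrightarrow> g x"
    and int: "\<And>k. set_integrable lborel S (\<lambda>x. (h k x)\<^sup>2)"
    and bound: "\<And>k. (LINT x:S|lborel. (h k x)\<^sup>2) \<le> B"
  shows "set_integrable lborel S (\<lambda>x. (g x)\<^sup>2)" and "(LINT x:S|lborel. (g x)\<^sup>2) \<le> B"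
proof -
  have [measurable]: "S \<in> sets lborel" by (rule S_sets)
  have conv: "AE x in lborel. (\<lambda>k. indicator S x * (h k x)\<^sup>2) \<longlonglongrightarrow> indicator S x * (g x)\<^sup>2"
    using lim by (rule AE_mp) (auto intro!: AE_I2 tendsto_intros split: split_indicator)
  have h_meas: "(\<lambda>x. indicator S x * (h k x)\<^sup>2) \<in> borel_measurable lborel" for k
    using assms(1) by measurable
  have g_meas: "(\<lambda>x. indicator S x * (g x)\<^sup>2) \<in> borel_measurable lborel"
    using assms(2) by measurable
  have h_int: "integrable lborel (\<lambda>x. indicator S x * (h k x)\<^sup>2)" for k
    using int[of k] by (simp add: set_integrable_def)
  have h_bound: "integral\<^sup>L lborel (\<lambda>x. indicator S x * (h k x)\<^sup>2) \<le> B" for k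
    using bound[of k] by (simp add: set_lebesgue_integral_def)
  note Fatou = Fatou_integral_le[OF h_meas g_meas _ _ conv h_int h_bound]
  show "set_integrable lborel S (\<lambda>x. (g x)\<^sup>2)"
    unfolding set_integrable_def by (simp add: Fatou(1))
  show "(LINT x:S|lborel. (g x)\<^sup>2) \<le> B"
    unfolding set_lebesgue_integral_def by (simp add: Fatou(2))
qed

subsection \<open>The Riesz--Fischer theorem for the cosine system on \<open>I\<close>\<close>

lemma borel_measurable_u_fun [measurable]: "u_fun i \<in> borel_measurable borel"
  by (rule borel_measurable_continuous_onI[OF continuous_on_u_fun])

lemma L2_sum_u_fun: "finite A \<Longrightarrow> L2 I_int (\<lambda>x. \<Sum>i\<in>A. c i * u_fun i x)"
  by (rule I.L2_sum) (auto simp: L2_u_fun)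

lemma ipI_sum_u_fun:
  assumes A: "finite A"
  shows "ipI (\<lambda>x. \<Sum>i\<in>A. c i * u_fun i x) (u_fun k) = (if k \<in> A then c k else 0)"
proof -
  have "ipI (\<lambda>x. \<Sum>i\<in>A. c i * u_fun i x) (u_fun k) = (\<Sum>i\<in>A. c i * ipI (u_fun i) (u_fun k))"
    unfolding ipI_eq_set_integral by (rule I.set_integral_sum_mult[OF A]) (auto simp: L2_u_fun)
  also have "\<dots> = (\<Sum>i\<in>A. if i = k then c i else 0)" by (intro sum.cong) (auto simp: ipI_u_fun)
  also have "\<dots> = (if k \<in> A then c k else 0)" using A by (simp add: sum.delta')
  finally show ?thesis .
qed

lemma set_integral_square_sum_u_fun:
  assumes A: "finite A"
  shows "(LINT x:I_int|lborel. (\<Sum>i\<in>A. c i * u_fun i x)\<^sup>2) = (\<Sum>i\<in>A. (c i)\<^sup>2)"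
proof -
  let ?T = "\<lambda>x. \<Sum>i\<in>A. c i * u_fun i x"
  have "(LINT x:I_int|lborel. (?T x)\<^sup>2) = (\<Sum>i\<in>A. c i * (LINT x:I_int|lborel. u_fun i x * ?T x))"
    unfolding power2_eq_square
    by (rule I.set_integral_sum_mult[OF A]) (auto simp: L2_u_fun L2_sum_u_fun[OF A])
  also have "\<dots> = (\<Sum>i\<in>A. c i * c i)"
    using ipI_sum_u_fun[OF A, of c] by (intro sum.cong refl) (simp add: ipI_eq_set_integral mult.commute)
  finally show ?thesis by (simp add: power2_eq_square)
qed

lemma set_integral_abs_le_square_I:
  assumes g: "L2 I_int g" and d: "d > 0"
  shows "(LINT x:I_int|lborel. \<bar>g x\<bar>) \<le> (LINT x:I_int|lborel. (g x)\<^sup>2) / (2 * d) + d"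
proof -
  have g2: "set_integrable lborel I_int (\<lambda>x. (g x)\<^sup>2)" using g by (simp add: L2_def)
  have "(LINT x:I_int|lborel. \<bar>g x\<bar>) \<le> (LINT x:I_int|lborel. (g x)\<^sup>2 / (2 * d) + d / 2)"
  proof (rule set_integral_mono)
    show "set_integrable lborel I_int (\<lambda>x. \<bar>g x\<bar>)"
      using I.L2_set_integrable[OF g] by (rule set_integrable_abs)
    show "set_integrable lborel I_int (\<lambda>x. (g x)\<^sup>2 / (2 * d) + d / 2)"
      using g2 I.set_integrable_const by (intro set_integral_add(1)) auto
    have "2 * d * \<bar>g x\<bar> \<le> (g x)\<^sup>2 + d * d" for x
      using zero_le_power2[of "\<bar>g x\<bar> - d"] by (simp add: power2_eq_square algebra_simps)
    then show "\<bar>g x\<bar> \<le> (g x)\<^sup>2 / (2 * d) + d / 2" for x using d by (simp add: field_simps)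
  qed
  also have "\<dots> = (LINT x:I_int|lborel. (g x)\<^sup>2) / (2 * d) + (LINT x:I_int|lborel. d / 2)"
    using g2 I.set_integrable_const by (subst set_integral_add(2)) auto
  also have "(LINT x:I_int|lborel. d / 2) = d"
    by (subst set_integral_const) (auto simp: I_int_def measure_def)
  finally show ?thesis .
qed

lemma abs_ipI_u_fun_le:
  assumes g: "L2 I_int g"
  shows "\<bar>ipI g (u_fun i)\<bar> \<le> (LINT x:I_int|lborel. \<bar>g x\<bar>)"
  using I.abs_set_integral_mult_le[OF L2_u_fun g abs_u_fun_le]
  by (simp add: ipI_eq_set_integral mult.commute)

lemma set_integral_abs_partial_sum_u_fun_diff:
  assumes "summable (\<lambda>i. (c i)\<^sup>2)" and mn: "m \<le> n" and e: "e > 0"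
    and tail: "(\<Sum>i. (c i)\<^sup>2) - (\<Sum>i<m. (c i)\<^sup>2) < e\<^sup>2 / 2"
  shows "(LINT x:I_int|lborel. \<bar>(\<Sum>i<n. c i * u_fun i x) - (\<Sum>i<m. c i * u_fun i x)\<bar>) < e"
proof -
  have diff: "(\<Sum>i<n. a i) - (\<Sum>i<m. a i) = (\<Sum>i\<in>{m..<n}. a i)" for a :: "nat \<Rightarrow> real"
    using sum_diff_nat_ivl[of 0 m n a] mn by (simp add: atLeast0LessThan)
  have "(\<Sum>i<n. (c i)\<^sup>2) \<le> (\<Sum>i. (c i)\<^sup>2)" using assms(1) by (rule sum_le_suminf) auto
  then have block: "(\<Sum>i\<in>{m..<n}. (c i)\<^sup>2) < e\<^sup>2 / 2" using tail diff[of "\<lambda>i. (c i)\<^sup>2"] by simp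
  have "(LINT x:I_int|lborel. \<bar>\<Sum>i\<in>{m..<n}. c i * u_fun i x\<bar>) \<le>
      (LINT x:I_int|lborel. (\<Sum>i\<in>{m..<n}. c i * u_fun i x)\<^sup>2) / (2 * (e / 2)) + e / 2"
    using e by (intro set_integral_abs_le_square_I L2_sum_u_fun) auto
  also have "\<dots> < (e\<^sup>2 / 2) / e + e / 2"
    using divide_strict_right_mono[OF block e] by (simp add: set_integral_square_sum_u_fun)
  also have "\<dots> = e" using e by (simp add: power2_eq_square field_simps)
  finally show ?thesis by (simp add: diff)
qed

lemma eventually_tail_sum_less:
  assumes "summable (a :: nat \<Rightarrow> real)" and "e > 0"
  shows "eventually (\<lambda>n. (\<Sum>i. a i) - (\<Sum>i<n. a i) < e) sequentially"
proof -
  have "(\<lambda>n. (\<Sum>i. a i) - (\<Sum>i<n. a i)) \<longlonglongrightarrow> (\<Sum>i. a i) - (\<Sum>i. a i)"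
    by (intro tendsto_intros summable_LIMSEQ assms(1))
  then show ?thesis using assms(2) by (simp add: order_tendstoD(2))
qed

lemma partial_sums_u_fun_AE_convergent_subseq:
  assumes cs: "summable (\<lambda>i. (c i)\<^sup>2)"
  obtains r f where "strict_mono r" "f \<in> borel_measurable lborel"
    "AE x in lborel. x \<in> I_int \<longrightarrow> (\<lambda>k. \<Sum>i<r k. c i * u_fun i x) \<longlonglongrightarrow> f x"
proof -
  define S where "S n x = (\<Sum>i<n. c i * u_fun i x)" for n x
  have S_meas: "S n \<in> borel_measurable lborel" for n
    unfolding S_def by measurable
  define s where "s n x = indicator I_int x * S n x" for n x
  have "integrable lborel (s n)" for n
    using I.L2_set_integrable[OF L2_sum_u_fun[of "{..<n}" c]] by (simp add: set_integrable_def s_def[abs_def] S_def)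
  then obtain r where r: "strict_mono r" "AE x in lborel. Cauchy (\<lambda>k. s (r k) x)"
  proof (rule cauchy_L1_AE_cauchy_subseq)
    fix e :: real assume e: "e > 0"
    obtain N where N: "\<And>n. n \<ge> N \<Longrightarrow> (\<Sum>i. (c i)\<^sup>2) - (\<Sum>i<n. (c i)\<^sup>2) < e\<^sup>2 / 2"
      using eventually_tail_sum_less[OF cs, of "e\<^sup>2 / 2"] e unfolding eventually_sequentially by auto
    have l1: "(LINT x|lborel. norm (s n x - s m x)) = (LINT x:I_int|lborel. \<bar>S n x - S m x\<bar>)" for m n
      unfolding set_lebesgue_integral_def s_def by (intro Bochner_Integration.integral_cong) (auto simp: indicator_def)
    have close: "(LINT x|lborel. norm (s n x - s m x)) < e" if "m \<ge> N" "m \<le> n" for m n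
      unfolding l1 S_def using cs that e N by (intro set_integral_abs_partial_sum_u_fun_diff) auto
    have sym: "(LINT x|lborel. norm (s n x - s m x)) = (LINT x|lborel. norm (s m x - s n x))" for m n
      by (simp only: norm_minus_commute)
    have "(LINT x|lborel. norm (s n x - s m x)) < e" if "m \<ge> N" "n \<ge> N" for m n
      using close[of m n] close[of n m] sym[of n m] that by (cases "m \<le> n") linarith+
    then show "\<exists>N. \<forall>i\<ge>N. \<forall>j\<ge>N. LINT x|lborel. norm (s i x - s j x) < e" by blast
  qed
  define f where "f x = lim (\<lambda>k. S (r k) x)" for x
  have "f \<in> borel_measurable lborel" unfolding f_def[abs_def]
    by (rule borel_measurable_lim_metric) (rule S_meas)
  moreover have "AE x in lborel. x \<in> I_int \<longrightarrow> (\<lambda>k. S (r k) x) \<longlonglongrightarrow> f x"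
    using r(2) by (rule AE_mp)
      (auto intro!: AE_I2 simp: s_def f_def Cauchy_convergent_iff convergent_LIMSEQ_iff)
  ultimately show ?thesis using r(1) that unfolding S_def by blast
qed

text \<open>By Fatou, the a.e. limit \<open>f\<close> of a subsequence of the partial sums \<open>S\<^sub>n\<close> satisfies
  \<open>\<integral>\<^sub>I (f - S\<^sub>n)\<^sup>2 \<le> \<Sum>\<^sub>i\<^sub>\<ge>\<^sub>n c\<^sub>i\<^sup>2\<close>, which gives both \<open>f \<in> L\<^sup>2\<close> (take \<open>n = 0\<close>) and its coefficients.\<close>

lemma set_integral_square_limit_sub_partial_sum_u_fun_le:
  assumes cs: "summable (\<lambda>i. (c i)\<^sup>2)" and r: "strict_mono r" and f_meas: "f \<in> borel_measurable lborel"
    and lim: "AE x in lborel. x \<in> I_int \<longrightarrow> (\<lambda>k. \<Sum>i<r k. c i * u_fun i x) \<longlonglongrightarrow> f x"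
  shows "set_integrable lborel I_int (\<lambda>x. (f x - (\<Sum>i<n. c i * u_fun i x))\<^sup>2)"
    and "(LINT x:I_int|lborel. (f x - (\<Sum>i<n. c i * u_fun i x))\<^sup>2) \<le> (\<Sum>i. (c i)\<^sup>2) - (\<Sum>i<n. (c i)\<^sup>2)"
proof -
  define S where "S n x = (\<Sum>i<n. c i * u_fun i x)" for n x
  define tl where "tl n = (\<Sum>i. (c i)\<^sup>2) - (\<Sum>i<n. (c i)\<^sup>2)" for n
  have S_L2: "L2 I_int (S n)" for n unfolding S_def by (rule L2_sum_u_fun) simp
  have S_meas: "S n \<in> borel_measurable lborel" for n
    unfolding S_def by measurable
  have bound: "(LINT x:I_int|lborel. (S (r (k + n)) x - S n x)\<^sup>2) \<le> tl n" for k
  proof -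
    have diff: "S (r (k + n)) x - S n x = (\<Sum>i\<in>{n..<r (k + n)}. c i * u_fun i x)" for x
      using sum_diff_nat_ivl[of 0 n "r (k + n)"] seq_suble[OF r, of "k + n"]
      by (simp add: S_def atLeast0LessThan)
    have "(\<Sum>i\<in>{n..<r (k + n)}. (c i)\<^sup>2) \<le> tl n"
      using sum_diff_nat_ivl[of 0 n "r (k + n)" "\<lambda>i. (c i)\<^sup>2"] seq_suble[OF r, of "k + n"]
        sum_le_suminf[OF cs, of "{..<r (k + n)}"]
      by (simp add: tl_def atLeast0LessThan)
    then show ?thesis by (simp add: diff set_integral_square_sum_u_fun)
  qed
  have conv: "AE x in lborel. x \<in> I_int \<longrightarrow> (\<lambda>k. S (r (k + n)) x - S n x) \<longlonglongrightarrow> f x - S n x"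
    using lim
  proof (rule AE_mp, intro AE_I2 impI)
    fix x assume "x \<in> I_int \<longrightarrow> (\<lambda>k. \<Sum>i<r k. c i * u_fun i x) \<longlonglongrightarrow> f x" "x \<in> I_int"
    then have "(\<lambda>k. S (r k) x) \<longlonglongrightarrow> f x" by (simp add: S_def)
    then show "(\<lambda>k. S (r (k + n)) x - S n x) \<longlonglongrightarrow> f x - S n x"
      by (intro tendsto_diff tendsto_const LIMSEQ_ignore_initial_segment)
  qed
  have integrable: "set_integrable lborel I_int (\<lambda>x. (S (r (k + n)) x - S n x)\<^sup>2)" for k
    using I.L2_lin_comb[OF S_L2 S_L2, of 1 "r (k + n)" "-1" n] by (simp add: L2_def)
  have "(\<lambda>x. S (r (k + n)) x - S n x) \<in> borel_measurable lborel" for k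
    using S_meas by measurable
  moreover have "(\<lambda>x. f x - S n x) \<in> borel_measurable lborel"
    using S_meas f_meas by measurable
  ultimately show "set_integrable lborel I_int (\<lambda>x. (f x - (\<Sum>i<n. c i * u_fun i x))\<^sup>2)"
    "(LINT x:I_int|lborel. (f x - (\<Sum>i<n. c i * u_fun i x))\<^sup>2) \<le> (\<Sum>i. (c i)\<^sup>2) - (\<Sum>i<n. (c i)\<^sup>2)"
    using I.set_integral_square_le_if_AE_tendsto[OF _ _ conv integrable bound]
    unfolding S_def tl_def by blast+
qed

lemma riesz_fischer_u_fun:
  assumes cs: "summable (\<lambda>i. (c i)\<^sup>2)"
  shows "\<exists>f. L2 I_int f \<and> (\<forall>i. ipI f (u_fun i) = c i)"
proof -
  define S where "S n x = (\<Sum>i<n. c i * u_fun i x)" for n x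
  define tl where "tl n = (\<Sum>i. (c i)\<^sup>2) - (\<Sum>i<n. (c i)\<^sup>2)" for n
  obtain r f where r: "strict_mono r" and f_meas: "f \<in> borel_measurable lborel"
    and lim: "AE x in lborel. x \<in> I_int \<longrightarrow> (\<lambda>k. \<Sum>i<r k. c i * u_fun i x) \<longlonglongrightarrow> f x"
    by (rule partial_sums_u_fun_AE_convergent_subseq[OF cs])
  note tail = set_integral_square_limit_sub_partial_sum_u_fun_le[OF cs r f_meas lim,
      folded S_def tl_def]
  have S_L2: "L2 I_int (S n)" for n unfolding S_def by (rule L2_sum_u_fun) simp
  have f_L2: "L2 I_int f"
    using tail(1)[of 0] I.set_borel_measurable_borel[OF f_meas] by (simp add: L2_def S_def)
  have "ipI f (u_fun i) = c i" for i
  proof -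
    have "\<bar>ipI f (u_fun i) - c i\<bar> \<le> e * 1" if e: "e > 0" for e
    proof -
      have "\<forall>\<^sub>F n in sequentially. i < n \<and> tl n < e\<^sup>2 / 2"
        unfolding tl_def using eventually_tail_sum_less[OF cs, of "e\<^sup>2 / 2"] e eventually_gt_at_top[of i]
        by (auto intro: eventually_conj)
      then obtain n where n: "i < n" "tl n < e\<^sup>2 / 2" by (auto dest: eventually_happens)
      have g: "L2 I_int (\<lambda>x. 1 * f x + (-1) * S n x)" by (rule I.L2_lin_comb[OF f_L2 S_L2])
      have "ipI (\<lambda>x. 1 * f x + (-1) * S n x) (u_fun i) = 1 * ipI f (u_fun i) + (-1) * ipI (S n) (u_fun i)"
        unfolding ipI_eq_set_integral by (rule I.set_integral_lin_comb_mult[OF f_L2 S_L2 L2_u_fun])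
      moreover have "ipI (S n) (u_fun i) = c i"
        using ipI_sum_u_fun[of "{..<n}" c i] n(1) by (simp add: S_def[abs_def])
      ultimately have "ipI f (u_fun i) - c i = ipI (\<lambda>x. 1 * f x + (-1) * S n x) (u_fun i)" by simp
      also have "\<bar>\<dots>\<bar> \<le> (LINT x:I_int|lborel. \<bar>1 * f x + (-1) * S n x\<bar>)"
        by (rule abs_ipI_u_fun_le[OF g])
      also have "\<dots> \<le> (LINT x:I_int|lborel. (1 * f x + (-1) * S n x)\<^sup>2) / (2 * (e / 2)) + e / 2"
        using e by (intro set_integral_abs_le_square_I g) auto
      also have "\<dots> \<le> (e\<^sup>2 / 2) / e + e / 2"
      proof -
        have "(LINT x:I_int|lborel. (1 * f x + (-1) * S n x)\<^sup>2) \<le> e\<^sup>2 / 2"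
          using tail(2)[of n] n(2) by simp
        then show ?thesis using divide_right_mono[of _ "e\<^sup>2 / 2" e] e by simp
      qed
      also have "\<dots> = e * 1" using e by (simp add: power2_eq_square field_simps)
      finally show ?thesis .
    qed
    then show ?thesis using eq_0_if_abs_le_eps_mult[of 1 "ipI f (u_fun i) - c i"] by simp
  qed
  then show ?thesis using f_L2 by blast
qed

lemma L2_Omega_if_XsO: "w \<in> XsO s \<Longrightarrow> L2 Omega w"
  by (simp add: XsO_def L2O_eq)

lemma coeffO_lin_comb:
  assumes "L2 Omega w" "L2 Omega v"
  shows "coeffO (\<lambda>p. a * w p + b * v p) i j = a * coeffO w i j + b * coeffO v i j"
  unfolding coeffO_def ipO_eq_set_integral
  by (rule Omega.set_integral_lin_comb_mult[OF assms L2_w_fun])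

lemma XsO_lin_comb:
  assumes w: "w \<in> XsO s" and v: "v \<in> XsO s"
  shows "(\<lambda>p. a * w p + b * v p) \<in> XsO s"
proof -
  let ?z = "\<lambda>p. a * w p + b * v p"
  have "(\<lambda>(i,j). normO_term s ?z i j) summable_on UNIV"
  proof (rule summable_on_comparison_test)
    show "(\<lambda>q. 2 * a\<^sup>2 * case_prod (normO_term s w) q + 2 * b\<^sup>2 * case_prod (normO_term s v) q) summable_on UNIV"
      by (intro summable_on_add summable_on_cmult_right summable_on_normO_term w v)
    fix q :: "nat \<times> nat"
    obtain i j where q: "q = (i, j)" by (cases q)
    have "(a * coeffO w i j + b * coeffO v i j)\<^sup>2 \<le> 2 * a\<^sup>2 * (coeffO w i j)\<^sup>2 + 2 * b\<^sup>2 * (coeffO v i j)\<^sup>2"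
      using zero_le_power2[of "a * coeffO w i j - b * coeffO v i j"]
      by (simp add: power2_eq_square algebra_simps)
    then have "(1 - lamO i j) powr (2 * s) * (a * coeffO w i j + b * coeffO v i j)\<^sup>2 \<le>
        (1 - lamO i j) powr (2 * s) * (2 * a\<^sup>2 * (coeffO w i j)\<^sup>2 + 2 * b\<^sup>2 * (coeffO v i j)\<^sup>2)"
      by (rule mult_left_mono) simp
    then show "case_prod (normO_term s ?z) q \<le>
        2 * a\<^sup>2 * case_prod (normO_term s w) q + 2 * b\<^sup>2 * case_prod (normO_term s v) q"
      using coeffO_lin_comb[OF L2_Omega_if_XsO[OF w] L2_Omega_if_XsO[OF v], of a b i j]
      by (simp add: q normO_term_def algebra_simps)
    show "0 \<le> case_prod (normO_term s ?z) q" by (simp add: q normO_term_nonneg)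
  qed
  then show ?thesis
    using Omega.L2_lin_comb[OF L2_Omega_if_XsO[OF w] L2_Omega_if_XsO[OF v]]
    by (simp add: XsO_def L2O_eq normO_term_def coeffO_def)
qed

lemma trace_coeff_sums:
  assumes s: "s > 1/4" and w: "w \<in> XsO s"
  shows "(\<lambda>j. coeffO w i j * c2 j) sums trace_coeff w i"
proof -
  have "summable (normO_term s w i)"
    by (rule summable_on_nat_prod_rows(1)[OF normO_term_nonneg summable_on_normO_term[OF w]])
  then have "summable (\<lambda>j. \<bar>coeffO w i j * c2 j\<bar>)" by (rule trace_coeff_row_bound(1)[OF s])
  then show ?thesis
    unfolding trace_coeff_def by (rule summable_sums[OF summable_rabs_cancel])
qed

lemma trace_coeff_lin_comb:
  assumes s: "s > 1/4" and w: "w \<in> XsO s" and v: "v \<in> XsO s"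
  shows "trace_coeff (\<lambda>p. a * w p + b * v p) i = a * trace_coeff w i + b * trace_coeff v i"
proof -
  have "(\<lambda>j. a * (coeffO w i j * c2 j) + b * (coeffO v i j * c2 j)) sums (a * trace_coeff w i + b * trace_coeff v i)"
    by (intro sums_add sums_mult trace_coeff_sums[OF s w] trace_coeff_sums[OF s v])
  then show ?thesis
    unfolding trace_coeff_def coeffO_lin_comb[OF L2_Omega_if_XsO[OF w] L2_Omega_if_XsO[OF v]]
    by (simp add: sums_iff algebra_simps)
qed

definition truncO :: "(real \<times> real \<Rightarrow> real) \<Rightarrow> nat \<Rightarrow> real \<times> real \<Rightarrow> real" where
  "truncO w N p = (\<Sum>(i,j)\<in>{..<N} \<times> {..<N}. coeffO w i j * w_fun i j p)"

lemma finite_comb_truncO: "finite_comb (truncO w N)"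
  unfolding finite_comb_def truncO_def by (intro exI[of _ "{..<N} \<times> {..<N}"] exI[of _ "coeffO w"]) simp

lemma filterlim_square_finite_subsets:
  "filterlim (\<lambda>N::nat. {..<N} \<times> {..<N}) (finite_subsets_at_top UNIV) sequentially"
  unfolding filterlim_finite_subsets_at_top
proof (intro allI impI)
  fix X :: "(nat \<times> nat) set" assume "finite X \<and> X \<subseteq> UNIV"
  then obtain M where M: "fst ` X \<union> snd ` X \<subseteq> {..<M}"
    using finite_nat_bounded[of "fst ` X \<union> snd ` X"] by blast
  have "X \<subseteq> {..<N} \<times> {..<N}" if "M \<le> N" for N using M that by force
  then show "eventually (\<lambda>N. finite ({..<N} \<times> {..<N}) \<and> X \<subseteq> {..<N} \<times> {..<N} \<and> {..<N} \<times> {..<N} \<subseteq> UNIV) sequentially"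
    by (auto intro: eventually_sequentiallyI)
qed

lemma normO_sub_truncO_tendsto_0:
  assumes w: "w \<in> XsO s"
  shows "(\<lambda>N. normO s (\<lambda>p. 1 * w p + (-1) * truncO w N p)) \<longlonglongrightarrow> 0"
proof -
  define G where "G = (\<lambda>(i,j). normO_term s w i j)"
  define S where "S = infsum G UNIV"
  have GS: "(G has_sum S) UNIV" unfolding S_def G_def using summable_on_normO_term[OF w] by (rule has_sum_infsum)
  define B where "B N = {..<N} \<times> {..<(N::nat)}" for N
  have norm_eq: "normO s (\<lambda>p. 1 * w p + (-1) * truncO w N p) = sqrt (S - sum G (B N))" for N
  proof -
    have "coeffO (\<lambda>p. 1 * w p + (-1) * truncO w N p) k l = (if (k, l) \<in> B N then 0 else coeffO w k l)" for k l
      using coeffO_lin_comb[OF L2_Omega_if_XsO[OF w] L2_lin_comb_w_fun[of "B N" "coeffO w"], of 1 "-1" k l]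
        coeffO_lin_comb_w_fun[of "B N" "coeffO w" k l]
      by (simp add: B_def truncO_def)
    then have "(\<lambda>(k,l). normO_term s (\<lambda>p. 1 * w p + (-1) * truncO w N p) k l) =
        (\<lambda>q. G q + - (if q \<in> B N then G q else 0))"
      by (auto simp: fun_eq_iff G_def normO_term_def)
    moreover have "((\<lambda>q. if q \<in> B N then G q else 0) has_sum sum G (B N)) UNIV"
    proof -
      have "(G has_sum sum G (B N)) (B N)" by (simp add: B_def)
      then show ?thesis by (rule has_sum_cong_neutral[THEN iffD1, rotated -1]) auto
    qed
    ultimately have "((\<lambda>(k,l). normO_term s (\<lambda>p. 1 * w p + (-1) * truncO w N p) k l) has_sum
        (S + - sum G (B N))) UNIV"
      using has_sum_add[OF GS has_sum_uminusI] by simp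
    then show ?thesis
      unfolding normO_def by (simp add: infsumI normO_term_def coeffO_def)
  qed
  have "(\<lambda>N. sum G (B N)) \<longlonglongrightarrow> S"
    using GS unfolding has_sum_def B_def by (rule filterlim_compose[OF _ filterlim_square_finite_subsets])
  then have "(\<lambda>N. sqrt (S - sum G (B N))) \<longlonglongrightarrow> sqrt (S - S)" by (intro tendsto_intros)
  then show ?thesis unfolding norm_eq by simp
qed

lemma ipI_Tr_truncO:
  assumes "i < N"
  shows "ipI (Tr (truncO w N)) (u_fun i) = (\<Sum>j<N. coeffO w i j * c2 j)"
proof -
  have "{j. (i, j) \<in> {..<N} \<times> {..<N}} = {..<N}" using assms by auto
  then show ?thesis
    unfolding truncO_def by (simp add: ipI_Tr_lin_comb_w_fun trace_coeff_lin_comb_w_fun)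
qed

lemma abs_ipI_u_fun_le_normI:
  assumes g: "g \<in> XsI s" and s: "s \<ge> 0"
  shows "\<bar>ipI g (u_fun i)\<bar> \<le> normI s g"
proof -
  have sm: "summable (\<lambda>i. (1 - lamI i) powr (2 * s) * (ipI g (u_fun i))\<^sup>2)" using g by (simp add: XsI_def)
  have "(ipI g (u_fun i))\<^sup>2 \<le> (1 - lamI i) powr (2 * s) * (ipI g (u_fun i))\<^sup>2"
    using one_le_one_minus_lamI_powr[of "2 * s" i] s by (simp add: mult_le_cancel_right1)
  also have "\<dots> \<le> (\<Sum>k. (1 - lamI k) powr (2 * s) * (ipI g (u_fun k))\<^sup>2)"
    using sum_le_suminf[OF sm, of "{i}"] by simp
  finally show ?thesis unfolding normI_def using real_sqrt_le_mono by fastforce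
qed

lemma XsI_if_ipI_eq_trace_coeff:
  assumes s: "s > 1/4" and w: "w \<in> XsO s"
    and g: "L2 I_int g" and coeff: "\<And>i. ipI g (u_fun i) = trace_coeff w i"
  shows "g \<in> XsI (s - 1/4)" and "normI (s - 1/4) g \<le> sqrt (trace_const s) * normO s w"
proof -
  show "g \<in> XsI (s - 1/4)"
    using g trace_coeff_weighted_bound(1)[OF s w] by (simp add: XsI_def L2I_eq coeff)
  have "normI (s - 1/4) g = sqrt (\<Sum>i. (1 - lamI i) powr (2 * (s - 1/4)) * (trace_coeff w i)\<^sup>2)"
    by (simp add: normI_def coeff)
  also have "\<dots> \<le> sqrt (trace_const s * (normO s w)\<^sup>2)"
    by (rule real_sqrt_le_mono[OF trace_coeff_weighted_bound(2)[OF s w]])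
  also have "\<dots> = sqrt (trace_const s) * normO s w"
    using normO_nonneg[of s w] by (simp add: real_sqrt_mult)
  finally show "normI (s - 1/4) g \<le> sqrt (trace_const s) * normO s w" .
qed

lemma exists_L2_ipI_eq_trace_coeff:
  assumes s: "s > 1/4" and w: "w \<in> XsO s"
  shows "\<exists>f. L2 I_int f \<and> (\<forall>i. ipI f (u_fun i) = trace_coeff w i)"
proof (rule riesz_fischer_u_fun)
  show "summable (\<lambda>i. (trace_coeff w i)\<^sup>2)"
  proof (rule summable_comparison_test'[OF trace_coeff_weighted_bound(1)[OF s w]])
    show "norm ((trace_coeff w i)\<^sup>2) \<le> (1 - lamI i) powr (2 * (s - 1/4)) * (trace_coeff w i)\<^sup>2" for i
      using one_le_one_minus_lamI_powr[of "2 * (s - 1/4)" i] s by (simp add: mult_le_cancel_right1)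
  qed
qed

text \<open>Junk for \<open>w \<notin> XsO s\<close>; otherwise such an \<open>f\<close> exists by Riesz--Fischer and is unique up to
  null sets by completeness.\<close>

definition trace_op :: "(real \<times> real \<Rightarrow> real) \<Rightarrow> real \<Rightarrow> real" where
  "trace_op w = (SOME f. L2 I_int f \<and> (\<forall>i. ipI f (u_fun i) = trace_coeff w i))"

lemma trace_op:
  assumes "s > 1/4" "w \<in> XsO s"
  shows "L2 I_int (trace_op w)" and "ipI (trace_op w) (u_fun i) = trace_coeff w i"
  using someI_ex[OF exists_L2_ipI_eq_trace_coeff[OF assms]] by (simp_all add: trace_op_def)

lemma trace_ext_trace_op:
  assumes s: "s > 1/4"
  shows "trace_ext s trace_op"
  unfolding trace_ext_def
proof (intro conjI ballI allI impI)
  show "trace_op w \<in> XsI (s - 1/4)" if "w \<in> XsO s" for w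
    using XsI_if_ipI_eq_trace_coeff(1)[OF s that trace_op[OF s that]] .
  show "\<exists>C. \<forall>w\<in>XsO s. normI (s - 1/4) (trace_op w) \<le> C * normO s w"
    using XsI_if_ipI_eq_trace_coeff(2)[OF s _ trace_op[OF s]] by blast
next
  fix w v a b assume w: "w \<in> XsO s" and v: "v \<in> XsO s"
  note z = XsO_lin_comb[OF w v, of a b]
  have "ipI (\<lambda>x. a * trace_op w x + b * trace_op v x) (u_fun i) = trace_coeff (\<lambda>p. a * w p + b * v p) i" for i
    unfolding ipI_eq_set_integral I.set_integral_lin_comb_mult[OF trace_op(1)[OF s w] trace_op(1)[OF s v] L2_u_fun]
    by (simp add: ipI_eq_set_integral[symmetric] trace_op(2)[OF s w] trace_op(2)[OF s v] trace_coeff_lin_comb[OF s w v])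
  then show "AE x in lborel. x \<in> I_int \<longrightarrow> trace_op (\<lambda>p. a * w p + b * v p) x = a * trace_op w x + b * trace_op v x"
    by (intro AE_eq_if_ipI_u_fun_eq trace_op[OF s z] I.L2_lin_comb trace_op[OF s w] trace_op[OF s v])
      (simp add: trace_op(2)[OF s z])
next
  fix w assume "finite_comb w"
  then show "AE x in lborel. x \<in> I_int \<longrightarrow> trace_op w x = Tr w x"
    using finite_comb_in_XsO[of w s] finite_comb_Tr
    by (intro AE_eq_if_ipI_u_fun_eq) (simp_all add: trace_op[OF s])
qed

lemma ipI_trace_ext_sub_truncO:
  assumes T: "trace_ext s T" and w: "w \<in> XsO s" and "i < N"
  shows "ipI (T (\<lambda>p. 1 * w p + (-1) * truncO w N p)) (u_fun i) =
    ipI (T w) (u_fun i) - (\<Sum>j<N. coeffO w i j * c2 j)"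
proof -
  have T_L2: "\<And>w. w \<in> XsO s \<Longrightarrow> L2 I_int (T w)"
    using T unfolding trace_ext_def by (auto simp: XsI_def L2I_eq)
  have trunc: "truncO w N \<in> XsO s" by (rule finite_comb_in_XsO[OF finite_comb_truncO])
  have "AE x in lborel. x \<in> I_int \<longrightarrow> T (\<lambda>p. 1 * w p + (-1) * truncO w N p) x = 1 * T w x + (-1) * T (truncO w N) x"
    using T w trunc unfolding trace_ext_def by blast
  moreover have "AE x in lborel. x \<in> I_int \<longrightarrow> T (truncO w N) x = Tr (truncO w N) x"
    using T finite_comb_truncO unfolding trace_ext_def by blast
  ultimately have "AE x in lborel. x \<in> I_int \<longrightarrow>
      T (\<lambda>p. 1 * w p + (-1) * truncO w N p) x = 1 * T w x + (-1) * Tr (truncO w N) x"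
    by eventually_elim auto
  then have "ipI (T (\<lambda>p. 1 * w p + (-1) * truncO w N p)) (u_fun i) =
      ipI (\<lambda>x. 1 * T w x + (-1) * Tr (truncO w N) x) (u_fun i)"
    unfolding ipI_eq_set_integral
    by (intro I.set_integral_mult_cong_AE I.L2_set_borel_measurable T_L2 XsO_lin_comb w trunc L2_u_fun
        I.L2_lin_comb finite_comb_Tr(1)[OF finite_comb_truncO])
  also have "\<dots> = ipI (T w) (u_fun i) - (\<Sum>j<N. coeffO w i j * c2 j)"
    unfolding ipI_eq_set_integral
      I.set_integral_lin_comb_mult[OF T_L2[OF w] finite_comb_Tr(1)[OF finite_comb_truncO] L2_u_fun]
    by (simp add: ipI_eq_set_integral[symmetric] ipI_Tr_truncO[OF assms(3)])
  finally show ?thesis .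
qed

text \<open>Any extension \<open>T\<close> has the right coefficients: they are approximated by those of the traces of the
  truncations \<open>truncO w N\<close>, with an error controlled by the bound on \<open>T\<close> and \<open>normO s (w - truncO w N) \<rightarrow> 0\<close>.\<close>

lemma ipI_trace_ext_eq_trace_coeff:
  assumes s: "s > 1/4" and T: "trace_ext s T" and w: "w \<in> XsO s"
  shows "ipI (T w) (u_fun i) = trace_coeff w i"
proof -
  obtain C where C: "\<And>w. w \<in> XsO s \<Longrightarrow> normI (s - 1/4) (T w) \<le> C * normO s w"
    using T unfolding trace_ext_def by blast
  have T_XsI: "\<And>w. w \<in> XsO s \<Longrightarrow> T w \<in> XsI (s - 1/4)" using T unfolding trace_ext_def by blast
  define P where "P N = (\<Sum>j<N. coeffO w i j * c2 j)" for N
  define d where "d N = (\<lambda>p. 1 * w p + (-1) * truncO w N p)" for N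
  have d: "d N \<in> XsO s" for N
    unfolding d_def by (rule XsO_lin_comb[OF w finite_comb_in_XsO[OF finite_comb_truncO]])
  have bound: "\<bar>ipI (T w) (u_fun i) - P N\<bar> \<le> \<bar>C\<bar> * normO s (d N)" if "i < N" for N
  proof -
    have "\<bar>ipI (T w) (u_fun i) - P N\<bar> = \<bar>ipI (T (d N)) (u_fun i)\<bar>"
      unfolding d_def P_def ipI_trace_ext_sub_truncO[OF T w that] ..
    also have "\<dots> \<le> normI (s - 1/4) (T (d N))"
      using s by (intro abs_ipI_u_fun_le_normI T_XsI d) simp
    also have "\<dots> \<le> \<bar>C\<bar> * normO s (d N)"
      using C[OF d] normO_nonneg[of s "d N"] by (meson abs_ge_self mult_right_mono order_trans)
    finally show ?thesis .
  qed
  have "(\<lambda>N. ipI (T w) (u_fun i) - P N) \<longlonglongrightarrow> 0"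
  proof (rule Lim_null_comparison)
    show "eventually (\<lambda>N. norm (ipI (T w) (u_fun i) - P N) \<le> \<bar>C\<bar> * normO s (d N)) sequentially"
      using bound by (intro eventually_sequentiallyI[of "Suc i"]) simp
    show "(\<lambda>N. \<bar>C\<bar> * normO s (d N)) \<longlonglongrightarrow> 0"
      using tendsto_mult_right_zero[OF normO_sub_truncO_tendsto_0[OF w]] unfolding d_def .
  qed
  then have "(\<lambda>N. ipI (T w) (u_fun i) - (ipI (T w) (u_fun i) - P N)) \<longlonglongrightarrow> ipI (T w) (u_fun i) - 0"
    by (intro tendsto_intros)
  then have "P \<longlonglongrightarrow> ipI (T w) (u_fun i)" by simp
  moreover have "P \<longlonglongrightarrow> trace_coeff w i"
    using trace_coeff_sums[OF s w] unfolding P_def sums_def .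
  ultimately show ?thesis by (rule LIMSEQ_unique)
qed

lemma trace_ext_unique:
  assumes s: "s > 1/4" and T: "trace_ext s T" and w: "w \<in> XsO s"
  shows "AE x in lborel. x \<in> I_int \<longrightarrow> T w x = trace_op w x"
proof (rule AE_eq_if_ipI_u_fun_eq)
  show "L2 I_int (T w)" using T w by (auto simp: trace_ext_def XsI_def L2I_eq)
  show "L2 I_int (trace_op w)" by (rule trace_op(1)[OF s w])
  show "ipI (T w) (u_fun i) = ipI (trace_op w) (u_fun i)" for i
    by (simp add: ipI_trace_ext_eq_trace_coeff[OF s T w] trace_op(2)[OF s w])
qed

theorem lemma12:
  fixes s :: real
  assumes "s > 1/4"
  shows "(\<exists>C. \<forall>w. finite_comb w \<longrightarrow>
            Tr w \<in> XsI (s - 1/4) \<and> normI (s - 1/4) (Tr w) \<le> C * normO s w)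
       \<and> (\<exists>T. trace_ext s T \<and>
            (\<forall>T'. trace_ext s T' \<longrightarrow>
               (\<forall>w\<in>XsO s. AE x in lborel. x \<in> I_int \<longrightarrow> T' w x = T w x)))"
proof (intro conjI exI allI impI ballI)
  fix w assume w: "finite_comb w"
  note trace_bound = XsI_if_ipI_eq_trace_coeff[OF assms finite_comb_in_XsO[OF w] finite_comb_Tr[OF w]]
  show "Tr w \<in> XsI (s - 1/4)" by (rule trace_bound(1))
  show "normI (s - 1/4) (Tr w) \<le> sqrt (trace_const s) * normO s w" by (rule trace_bound(2))
next
  show "trace_ext s trace_op" by (rule trace_ext_trace_op[OF assms])
next
  fix T w assume "trace_ext s T" "w \<in> XsO s"
  then show "AE x in lborel. x \<in> I_int \<longrightarrow> T w x = trace_op w x"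
    by (rule trace_ext_unique[OF assms])
qed

end
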